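(* Let $\Sigma$ be a non-empty finite or countably infinite alphabet and let $\mu$ be a probability map over $\Sigma$ such that there exists at least one $\mu$-distributed sequence $\alpha\in\Sigma^\omega$. Then the following are equivalent: (1) $\mu$ is induced by a positive Bernoulli distribution $p$ on $\Sigma$, i.e. $p(a)>0$ for all $a\in\Sigma$ and $\mu(a_1\cdots a_n)=\prod_{i=1}^n p(a_i)$ for all $a_1,\dots,a_n\in\Sigma$; (2) (Postnikova property) for every $w\in\Sigma^*$ and every $\mu$-distributed $\alpha\in\Sigma^\omega$, if the sequence $\mathcal S_w[\alpha]$ selected from $\alpha$ by the Postnikova strategy $\mathcal S_w=\{vw : v\in\Sigma^*\}$ is infinite, then it is $\mu$-distributed; (3) (Agafonov property) for every DFA $A$ over $\Sigma$ and every $\mu$-distributed $\alpha\in\Sigma^\omega$, if the sequence $A[\alpha]$ selected from $\alpha$ by $A$ is infinite, then it is $\mu$-distributed.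
   Context: $\Sigma^*$, $\Sigma^+$, $\Sigma^\omega$ denote finite, non-empty finite, and right-infinite sequences over $\Sigma$; $\lambda$ is the empty word; for $\alpha=a_1a_2\cdots$, $\alpha|_{\le N}=a_1\cdots a_N$. A probability map over $\Sigma$ is a map $\mu:\Sigma^+\to[0,1]$ such that for every $n\ge1$, $\sum_{w\in\Sigma^n}\mu(w)=1$ (convention $\mu(\lambda)=1$). $\mu$ is induced by a Bernoulli distribution $p:\Sigma\to[0,1]$ (with $\sum_{a\in\Sigma}p(a)=1$) if $\mu(a_1\cdots a_n)=\prod_{i=1}^n p(a_i)$; $p$ is positive if $p(a)>0$ for all $a$. For $v=v_1\cdots v_N$ and $w=w_1\cdots w_n$, $\#_w(v)=|\{j\le N+1-n: v_j\cdots v_{j+n-1}=w\}|$. A sequence $\alpha\in\Sigma^\omega$ is $\mu$-distributed if for every $w\in\Sigma^+$, $\lim_{N\to\infty}\#_w(\alpha|_{\le N})/N$ exists and equals $\mu(w)$. A strategy is a set $S\subseteq\Sigma^*$; the sequence $S[\alpha]$ selected by $S$ from $\alpha=\alpha_1\alpha_2\cdots$ is the (finite or infinite) subsequence consisting of those $\alpha_i$ (in order) with $\alpha_1\cdots\alpha_{i-1}\in S$. A DFA over $\Sigma$ (where $\Sigma$ may be infinite) is $A=(Q,\Sigma,\delta,q_s,F)$ with $Q$ finite, $\delta:Q\times\Sigma\to Q$ total, start state $q_s$, accepting states $F$; $\delta^*$ is the extension to words; $A[\alpha]$ is $S[\alpha]$ for $S=\{u\in\Sigma^*:\delta^*(q_s,u)\in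 F\}$. *)

theory Defs
  imports "HOL-Analysis.Analysis" "HOL-Library.Infinite_Set"
begin

text \<open>The alphabet is a type of class countable (non-empty, finite or countably infinite).
 Finite words are lists; right-infinite sequences are functions nat => 'a, with
 alpha 0 the first letter.\<close>

definition prob_map :: "('a list \<Rightarrow> real) \<Rightarrow> bool" where
  "prob_map \<mu> \<longleftrightarrow> \<mu> [] = 1 \<and>
     (\<forall>w. w \<noteq> [] \<longrightarrow> 0 \<le> \<mu> w \<and> \<mu> w \<le> 1) \<and>
     (\<forall>n\<ge>1. (\<mu> has_sum 1) {w. length w = n})"

definition bernoulli_distr :: "('a \<Rightarrow> real) \<Rightarrow> bool" where
  "bernoulli_distr p \<longleftrightarrow> (\<forall>a. 0 \<le> p a) \<and> (p has_sum 1) UNIV"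

definition induced_by :: "('a list \<Rightarrow> real) \<Rightarrow> ('a \<Rightarrow> real) \<Rightarrow> bool" where
  "induced_by \<mu> p \<longleftrightarrow> (\<forall>w. w \<noteq> [] \<longrightarrow> \<mu> w = prod_list (map p w))"

definition pref :: "(nat \<Rightarrow> 'a) \<Rightarrow> nat \<Rightarrow> 'a list" where
  "pref \<alpha> N = map \<alpha> [0..<N]"

definition occ :: "'a list \<Rightarrow> 'a list \<Rightarrow> nat" where
  "occ w v = card {j. j + length w \<le> length v \<and> take (length w) (drop j v) = w}"

definition mu_distributed :: "('a list \<Rightarrow> real) \<Rightarrow> (nat \<Rightarrow> 'a) \<Rightarrow> bool" where
  "mu_distributed \<mu> \<alpha> \<longleftrightarrow>
     (\<forall>w. w \<noteq> [] \<longrightarrow> (\<lambda>N. real (occ w (pref \<alpha> N)) / real N) \<longlonglongrightarrow> \<mu> w)"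

text \<open>Selection by a strategy S: position i (0-based) is selected iff the prefix of
 length i lies in S.\<close>
definition sel_positions :: "'a list set \<Rightarrow> (nat \<Rightarrow> 'a) \<Rightarrow> nat set" where
  "sel_positions S \<alpha> = {i. pref \<alpha> i \<in> S}"

definition sel_infinite :: "'a list set \<Rightarrow> (nat \<Rightarrow> 'a) \<Rightarrow> bool" where
  "sel_infinite S \<alpha> \<longleftrightarrow> infinite (sel_positions S \<alpha>)"

text \<open>the selected sequence (meaningful when the selection is infinite)\<close>
definition selected :: "'a list set \<Rightarrow> (nat \<Rightarrow> 'a) \<Rightarrow> (nat \<Rightarrow> 'a)" where
  "selected S \<alpha> = (\<lambda>k. \<alpha> (enumerate (sel_positions S \<alpha>) k))"

definition postnikova :: "'a list \<Rightarrow> 'a list set" where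
  "postnikova w = {v @ w | v. True}"

text \<open>DFA with a finite state set Q (states coded as naturals), total transition
 function delta on Q, start state qs, accepting states F.\<close>
definition is_dfa :: "nat set \<Rightarrow> (nat \<Rightarrow> 'a \<Rightarrow> nat) \<Rightarrow> nat \<Rightarrow> nat set \<Rightarrow> bool" where
  "is_dfa Q \<delta> qs F \<longleftrightarrow> finite Q \<and> (\<forall>q\<in>Q. \<forall>a. \<delta> q a \<in> Q) \<and> qs \<in> Q \<and> F \<subseteq> Q"

definition dfa_strategy :: "(nat \<Rightarrow> 'a \<Rightarrow> nat) \<Rightarrow> nat \<Rightarrow> nat set \<Rightarrow> 'a list set" where
  "dfa_strategy \<delta> qs F = {u. foldl \<delta> qs u \<in> F}"

end

theory Submission
  imports Defs "HOL-Probability.Probability"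
begin

text \<open>Agafonov's direction rests on a law of large numbers for statistics read along the run of
  an automaton on a normal sequence: under the Bernoulli measure, deviations of such a statistic
  over blocks at distance at least \<open>T\<close> are uncorrelated, so block averages are small in
  mean square, and normality transfers this bound to the sequence.  It gives the right letter
  frequencies in every automatic selection, and longer words follow by induction, since
  selecting after the occurrences of \<open>w\<close> in an automatic selection is again automatic.
  Postnikova strategies are automatic.  Conversely, selecting after \<open>w\<close> shows
  \<open>\<mu>(w a) = \<mu>(w) \<mu>(a)\<close>; and if a letter \<open>b\<close> had probability \<open>0\<close>, putting \<open>b\<close> exactly
  at the squares and their successors would keep a \<open>\<mu>\<close>-distributed sequence
  \<open>\<mu>\<close>-distributed, while after each \<open>b\<close> the letter \<open>b\<close> would recur with frequency at
  least \<open>1/4\<close>.\<close>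

section \<open>Random words drawn from a Bernoulli distribution\<close>

abbreviation expect :: "'b pmf \<Rightarrow> ('b \<Rightarrow> real) \<Rightarrow> real" where
  "expect M f \<equiv> measure_pmf.expectation M f"

lemma integrable_measure_pmf_bounded:
  fixes f :: "'b \<Rightarrow> real"
  shows "(\<And>x. \<bar>f x\<bar> \<le> B) \<Longrightarrow> integrable (measure_pmf M) f"
  by (rule measure_pmf.integrable_const_bound[where B=B]) auto

lemma abs_expect_le:
  fixes f :: "'b \<Rightarrow> real"
  assumes "\<And>x. \<bar>f x\<bar> \<le> B"
  shows "\<bar>expect M f\<bar> \<le> B"
proof -
  have "\<bar>expect M f\<bar> \<le> expect M (\<lambda>x. \<bar>f x\<bar>)"
    by (rule integral_abs_bound)
  also have "\<dots> \<le> B"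
    using assms by (intro measure_pmf.integral_le_const integrable_measure_pmf_bounded) auto
  finally show ?thesis .
qed

lemma expect_in_unit_interval:
  fixes f :: "'b \<Rightarrow> real"
  assumes "\<And>x. 0 \<le> f x \<and> f x \<le> 1"
  shows "0 \<le> expect M f \<and> expect M f \<le> 1"
  using abs_expect_le[of f 1 M] assms by (auto intro!: integral_nonneg_AE)

lemma expect_cong:
  "(\<And>x. x \<in> set_pmf M \<Longrightarrow> f x = g x) \<Longrightarrow> expect M f = expect M g"
  by (intro integral_cong_AE) (auto simp: AE_measure_pmf_iff)

lemma expect_bind_pmf:
  fixes f :: "'c \<Rightarrow> real"
  assumes "\<And>x. \<bar>f x\<bar> \<le> B"
  shows "expect (bind_pmf M N) f = expect M (\<lambda>x. expect (N x) f)"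
  unfolding measure_pmf_bind
  by (rule integral_bind[where B=B and B'=1 and K="count_space UNIV"])
     (auto simp: assms measure_pmf.emeasure_space_1 measure_pmf.finite_measure
        measure_pmf_in_subprob_algebra)

lemma expect_abs_le_sqrt_expect_square:
  fixes g :: "'b \<Rightarrow> real"
  assumes "\<And>x. \<bar>g x\<bar> \<le> B"
  shows "expect M (\<lambda>x. \<bar>g x\<bar>) \<le> sqrt (expect M (\<lambda>x. (g x)\<^sup>2))"
proof -
  define c where "c = expect M (\<lambda>x. \<bar>g x\<bar>)"
  have "0 \<le> B" using assms[of undefined] by linarith
  then have "\<bar>(g x)\<^sup>2\<bar> \<le> B * B" for x
    using mult_mono[OF assms assms, of x x] by (simp add: power2_eq_square abs_mult)
  then have "integrable M (\<lambda>x. (g x)\<^sup>2)" "integrable M (\<lambda>x. \<bar>g x\<bar>)"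
    using assms by (auto intro!: integrable_measure_pmf_bounded)
  moreover have "(\<bar>g x\<bar> - c)\<^sup>2 = (g x)\<^sup>2 - 2 * c * \<bar>g x\<bar> + c\<^sup>2" for x
    by (simp add: power2_eq_square algebra_simps)
  ultimately have "expect M (\<lambda>x. (\<bar>g x\<bar> - c)\<^sup>2) = expect M (\<lambda>x. (g x)\<^sup>2) - c\<^sup>2"
    by (simp add: c_def power2_eq_square)
  moreover have "0 \<le> expect M (\<lambda>x. (\<bar>g x\<bar> - c)\<^sup>2)"
    by (rule integral_nonneg_AE) auto
  moreover have "0 \<le> c"
    unfolding c_def by (rule integral_nonneg_AE) auto
  ultimately show ?thesis
    unfolding c_def[symmetric] by (simp add: real_le_rsqrt)
qed

lemma sum_pmf_mult_le_expect:
  fixes Z :: "'b \<Rightarrow> real"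
  assumes "finite S" and "\<And>v. 0 \<le> Z v \<and> Z v \<le> B"
  shows "(\<Sum>w\<in>S. Z w * pmf M w) \<le> expect M Z"
proof -
  have "0 \<le> B" using assms(2)[of undefined] by linarith
  have "(\<Sum>w\<in>S. Z w * pmf M w) = expect M (\<lambda>v. if v \<in> S then Z v else 0)"
    using assms(1) by (subst integral_measure_pmf_real[of S]) (auto split: if_splits intro: sum.cong)
  also have "\<dots> \<le> expect M Z"
    using assms \<open>0 \<le> B\<close> by (intro integral_mono integrable_measure_pmf_bounded[where B=B]) auto
  finally show ?thesis .
qed

definition letter_pmf :: "('a \<Rightarrow> real) \<Rightarrow> 'a pmf" where
  "letter_pmf p = embed_pmf p"

fun word_pmf :: "('a \<Rightarrow> real) \<Rightarrow> nat \<Rightarrow> 'a list pmf" where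
  "word_pmf p 0 = return_pmf []"
| "word_pmf p (Suc n) = bind_pmf (letter_pmf p) (\<lambda>a. map_pmf (Cons a) (word_pmf p n))"

lemma length_in_set_word_pmf: "x \<in> set_pmf (word_pmf p n) \<Longrightarrow> length x = n"
  by (induction n arbitrary: x) auto

lemma pmf_letter_pmf:
  fixes p :: "'a::countable \<Rightarrow> real"
  assumes "bernoulli_distr p"
  shows "pmf (letter_pmf p) a = p a"
proof -
  have nonneg: "\<And>x. 0 \<le> p x" and sum1: "(p has_sum 1) UNIV"
    using assms unfolding bernoulli_distr_def by auto
  then have "Infinite_Set_Sum.abs_summable_on p UNIV"
    by (simp add: abs_summable_equivalent[symmetric] has_sum_iff)
  moreover have "infsetsum p UNIV = 1"
    using sum1 calculation by (simp add: infsetsum_infsum has_sum_iff)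
  ultimately have "(\<integral>\<^sup>+x. ennreal (p x) \<partial>count_space UNIV) = 1"
    using nn_integral_conv_infsetsum[of p UNIV] nonneg by simp
  then show ?thesis
    unfolding letter_pmf_def using nonneg by (simp add: pmf_embed_pmf)
qed

context
  fixes p :: "'a::countable \<Rightarrow> real"
  assumes bernoulli: "bernoulli_distr p"
begin

lemma pmf_word_pmf: "length w = n \<Longrightarrow> pmf (word_pmf p n) w = prod_list (map p w)"
proof (induction w arbitrary: n)
  case Nil
  then show ?case by simp
next
  case (Cons b u)
  then obtain m where n: "n = Suc m" and m: "length u = m" by auto
  have "pmf (map_pmf (Cons a) (word_pmf p m)) (b # u) = (if a = b then pmf (word_pmf p m) u else 0)"
    for a
    by (auto simp: pmf_map_inj' pmf_eq_0_set_pmf)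
  then have "pmf (word_pmf p n) (b # u) = expect (letter_pmf p) (\<lambda>a. if a = b then pmf (word_pmf p m) u else 0)"
    by (simp add: n pmf_bind)
  also have "\<dots> = pmf (word_pmf p m) u * pmf (letter_pmf p) b"
    by (subst integral_measure_pmf_real[of "{b}"]) (auto split: if_splits)
  finally show ?case using Cons.IH[OF m] by (simp add: pmf_letter_pmf[OF bernoulli])
qed

lemma has_sum_prod_list_words: "((\<lambda>w. prod_list (map p w)) has_sum 1) {w. length w = n}"
proof -
  have "infsetsum (pmf (word_pmf p n)) {w. length w = n} = 1"
    by (rule infsetsum_pmf_eq_1) (auto dest: length_in_set_word_pmf)
  then have "(pmf (word_pmf p n) has_sum 1) {w. length w = n}"
    by (metis abs_summable_equivalent abs_summable_summable has_sum_infsum infsetsum_infsum pmf_abs_summable)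
  then show ?thesis
    by (rule has_sum_cong[THEN iffD1, rotated]) (simp add: pmf_word_pmf)
qed

lemma expect_word_pmf_Suc:
  assumes "\<And>v. \<bar>f v\<bar> \<le> B"
  shows "expect (word_pmf p (Suc n)) f = expect (letter_pmf p) (\<lambda>a. expect (word_pmf p n) (\<lambda>v. f (a # v)))"
  by (simp add: expect_bind_pmf[where B=B] assms)

lemma expect_word_pmf_add:
  assumes "\<And>v. \<bar>f v\<bar> \<le> B"
  shows "expect (word_pmf p (k + n)) f = expect (word_pmf p k) (\<lambda>x. expect (word_pmf p n) (\<lambda>y. f (x @ y)))"
  using assms
proof (induction k arbitrary: f)
  case 0
  then show ?case by simp
next
  case (Suc k)
  have "expect (word_pmf p (Suc k + n)) f
      = expect (letter_pmf p) (\<lambda>a. expect (word_pmf p (k + n)) (\<lambda>v. f (a # v)))"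
    using expect_word_pmf_Suc[of f B "k + n"] Suc.prems by simp
  also have "\<dots> = expect (letter_pmf p) (\<lambda>a. expect (word_pmf p k) (\<lambda>x. expect (word_pmf p n) (\<lambda>y. f (a # x @ y))))"
    using Suc.IH[of "\<lambda>v. f (_ # v)"] Suc.prems by simp
  also have "\<dots> = expect (word_pmf p (Suc k)) (\<lambda>x. expect (word_pmf p n) (\<lambda>y. f (x @ y)))"
    by (subst expect_word_pmf_Suc[where B=B]) (auto intro!: abs_expect_le Suc.prems)
  finally show ?case .
qed

lemma expect_word_pmf_take:
  assumes "\<And>v. \<bar>h v\<bar> \<le> B" and "T \<le> L"
  shows "expect (word_pmf p L) (\<lambda>v. h (take T v)) = expect (word_pmf p T) h"
proof -
  have "expect (word_pmf p (T + (L - T))) (\<lambda>v. h (take T v))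
      = expect (word_pmf p T) (\<lambda>x. expect (word_pmf p (L - T)) (\<lambda>y. h (take T (x @ y))))"
    by (rule expect_word_pmf_add[where B=B]) (use assms in auto)
  also have "\<dots> = expect (word_pmf p T) h"
    by (rule expect_cong) (auto dest: length_in_set_word_pmf)
  finally show ?thesis using assms by simp
qed

lemma prob_word_pmf_prefix:
  assumes "length u \<le> L"
  shows "expect (word_pmf p L) (\<lambda>v. if take (length u) v = u then 1 else 0) = prod_list (map p u)"
proof -
  have "expect (word_pmf p (length u)) (\<lambda>v. if v = u then 1 else 0) = pmf (word_pmf p (length u)) u"
    by (subst integral_measure_pmf_real[of "{u}"]) (auto split: if_splits)
  then show ?thesis
    using expect_word_pmf_take[of "\<lambda>v. if v = u then 1 else 0" 1 "length u" L] assms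
    by (simp add: pmf_word_pmf)
qed

end

section \<open>Windows, occurrences and empirical averages\<close>

abbreviation word_freq :: "'a list \<Rightarrow> (nat \<Rightarrow> 'a) \<Rightarrow> nat \<Rightarrow> real" where
  "word_freq w \<alpha> N \<equiv> real (occ w (pref \<alpha> N)) / real N"

definition bernoulli_normal :: "('a \<Rightarrow> real) \<Rightarrow> (nat \<Rightarrow> 'a) \<Rightarrow> bool" where
  "bernoulli_normal p \<alpha> \<longleftrightarrow> (\<forall>w. w \<noteq> [] \<longrightarrow> (word_freq w \<alpha> \<longlongrightarrow> prod_list (map p w)) sequentially)"

lemma mu_distributed_iff_bernoulli_normal:
  "induced_by \<mu> p \<Longrightarrow> mu_distributed \<mu> \<alpha> \<longleftrightarrow> bernoulli_normal p \<alpha>"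
  unfolding induced_by_def mu_distributed_def bernoulli_normal_def by auto

definition window :: "(nat \<Rightarrow> 'a) \<Rightarrow> nat \<Rightarrow> nat \<Rightarrow> 'a list" where
  "window \<alpha> i L = map \<alpha> [i..<i + L]"

lemma length_window [simp]: "length (window \<alpha> i L) = L"
  by (simp add: window_def)

lemma length_pref [simp]: "length (pref \<alpha> N) = N"
  by (simp add: pref_def)

lemma pref_Suc: "pref \<alpha> (Suc n) = pref \<alpha> n @ [\<alpha> n]"
  by (simp add: pref_def)

lemma pref_add: "pref \<alpha> (i + m) = pref \<alpha> i @ window \<alpha> i m"
  by (simp add: pref_def window_def upt_add_eq_append[of 0 i])

lemma window_Suc: "window \<alpha> j (Suc n) = window \<alpha> j n @ [\<alpha> (j + n)]"
  by (simp add: window_def)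

lemma take_window: "m \<le> L \<Longrightarrow> take m (window \<alpha> j L) = window \<alpha> j m"
  by (simp add: window_def take_map)

lemma take_drop_window: "m + T \<le> L \<Longrightarrow> take T (drop m (window \<alpha> j L)) = window \<alpha> (j + m) T"
  by (simp add: window_def take_map drop_map add.assoc)

lemma occ_pref_eq_card_windows:
  "occ u (pref \<alpha> K) = card {j. j + length u \<le> K \<and> window \<alpha> j (length u) = u}"
proof -
  have "take (length u) (drop j (pref \<alpha> K)) = window \<alpha> j (length u)" if "j + length u \<le> K" for j
    using that by (simp add: pref_def window_def take_map drop_map)
  then have "{j. j + length u \<le> length (pref \<alpha> K) \<and> take (length u) (drop j (pref \<alpha> K)) = u} =
      {j. j + length u \<le> K \<and> window \<alpha> j (length u) = u}"
    by auto
  then show ?thesis unfolding occ_def by simp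
qed

lemma occ_Nil_pref: "occ [] (pref \<alpha> K) = Suc K"
proof -
  have "{j. j \<le> K \<and> window \<alpha> j 0 = []} = {..K}"
    by (auto simp: window_def)
  then show ?thesis unfolding occ_pref_eq_card_windows[of "[]"] by simp
qed

lemma occ_singleton_pref: "occ [a] (pref \<alpha> J) = card {k. k < J \<and> \<alpha> k = a}"
proof -
  have "{j. j + 1 \<le> J \<and> window \<alpha> j 1 = [a]} = {k. k < J \<and> \<alpha> k = a}"
    by (auto simp: window_def)
  then show ?thesis unfolding occ_pref_eq_card_windows[of "[a]"] by simp
qed

lemma occ_pref_eq_card_window_starts:
  assumes "length w = L" and "L \<ge> 1"
  shows "occ w (pref \<alpha> (N + (L - 1))) = card {j. j < N \<and> window \<alpha> j L = w}"
proof -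
  have "{j. j + L \<le> N + (L - 1) \<and> window \<alpha> j L = w} = {j. j < N \<and> window \<alpha> j L = w}"
    using assms(2) by auto
  then show ?thesis using assms(1) by (simp add: occ_pref_eq_card_windows)
qed

lemma occ_append_le: "occ (w @ u) v \<le> occ w v"
  unfolding occ_def
proof (rule card_mono)
  show "finite {j. j + length w \<le> length v \<and> take (length w) (drop j v) = w}"
    by (rule finite_subset[of _ "{..length v}"]) auto
  show "{j. j + length (w @ u) \<le> length v \<and> take (length (w @ u)) (drop j v) = w @ u}
      \<subseteq> {j. j + length w \<le> length v \<and> take (length w) (drop j v) = w}"
    by (auto simp: take_add)
qed

lemma tendsto_shift_ratio:
  fixes g :: "nat \<Rightarrow> real"
  assumes "(\<lambda>N. g N / real N) \<longlonglongrightarrow> x"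
  shows "(\<lambda>N. g (N + k) / real N) \<longlonglongrightarrow> x"
proof -
  have "(\<lambda>N. g (N + k) / real (N + k)) \<longlonglongrightarrow> x"
    using LIMSEQ_ignore_initial_segment[OF assms, of k] by simp
  moreover have "(\<lambda>N. real (N + k) / real N) \<longlonglongrightarrow> 1"
  proof -
    have "(\<lambda>N. 1 + real k / real N) \<longlonglongrightarrow> 1 + 0"
      by (intro tendsto_intros lim_const_over_n)
    moreover have "eventually (\<lambda>N. 1 + real k / real N = real (N + k) / real N) sequentially"
      using eventually_gt_at_top[of 0] by eventually_elim (simp add: field_simps)
    ultimately show ?thesis using Lim_transform_eventually by fastforce
  qed
  ultimately have "(\<lambda>N. g (N + k) / real (N + k) * (real (N + k) / real N)) \<longlonglongrightarrow> x * 1"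
    by (rule tendsto_mult)
  moreover have "eventually (\<lambda>N. g (N + k) / real (N + k) * (real (N + k) / real N) = g (N + k) / real N) sequentially"
    using eventually_gt_at_top[of 0] by eventually_elim simp
  ultimately show ?thesis using Lim_transform_eventually by fastforce
qed

lemma sum_le_sum_fibre_counts:
  fixes Z :: "'b \<Rightarrow> real" and x :: "nat \<Rightarrow> 'b" and N :: nat
  assumes "finite S" and "\<And>v. Z v \<le> B"
  defines "cnt w \<equiv> real (card {j. j < N \<and> x j = w})"
  shows "(\<Sum>j<N. Z (x j)) \<le> (\<Sum>w\<in>S. Z w * cnt w) + B * (real N - (\<Sum>w\<in>S. cnt w))"
proof -
  have fibres: "(\<Sum>j<N. if x j \<in> S then g (x j) else 0) = (\<Sum>w\<in>S. g w * cnt w)" for g :: "'b \<Rightarrow> real"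
  proof -
    have "(\<Sum>j<N. if x j \<in> S then g (x j) else 0) = (\<Sum>j<N. \<Sum>w\<in>S. g w * (if x j = w then 1 else 0))"
      by (intro sum.cong refl) (simp add: assms(1) if_distrib sum.delta cong: if_cong)
    also have "\<dots> = (\<Sum>w\<in>S. g w * cnt w)"
      unfolding cnt_def by (subst sum.swap) (simp add: sum_distrib_left[symmetric] sum.If_cases Int_def)
    finally show ?thesis .
  qed
  have "(\<Sum>j<N. Z (x j)) = (\<Sum>j<N. if x j \<in> S then Z (x j) else 0) + (\<Sum>j<N. if x j \<in> S then 0 else Z (x j))"
    by (subst sum.distrib[symmetric]) (intro sum.cong refl, simp)
  also have "(\<Sum>j<N. if x j \<in> S then 0 else Z (x j)) \<le> (\<Sum>j<N. B * (1 - (if x j \<in> S then 1 else 0)))"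
    by (intro sum_mono) (simp add: assms(2))
  also have "\<dots> = B * (real N - (\<Sum>j<N. if x j \<in> S then 1 else 0))"
    by (simp add: sum_distrib_left[symmetric] sum_subtractf)
  finally show ?thesis using fibres[of Z] fibres[of "\<lambda>_. 1"] by simp
qed

text \<open>Only an upper bound holds: frequency mass may escape to infinitely many values.\<close>

lemma eventually_average_le_of_frequencies:
  fixes x :: "nat \<Rightarrow> 'b" and f Z :: "'b \<Rightarrow> real"
  assumes f: "(f has_sum 1) A"
    and freq: "\<And>w. w \<in> A \<Longrightarrow> (\<lambda>N. real (card {j. j < N \<and> x j = w}) / real N) \<longlonglongrightarrow> f w"
    and Z: "\<And>v. 0 \<le> Z v \<and> Z v \<le> B"
    and mean: "\<And>S. finite S \<Longrightarrow> S \<subseteq> A \<Longrightarrow> (\<Sum>w\<in>S. Z w * f w) \<le> E"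
    and "\<epsilon> > 0"
  shows "eventually (\<lambda>N. (\<Sum>j<N. Z (x j)) / real N \<le> E + \<epsilon>) sequentially"
proof -
  define cnt where "cnt N w = real (card {j. j < N \<and> x j = w})" for N w
  have "B \<ge> 0" using Z[of undefined] by linarith
  define \<eta> where "\<eta> = \<epsilon> / (2 * (B + 1))"
  have "\<eta> > 0" and B\<eta>: "B * \<eta> < \<epsilon>"
    unfolding \<eta>_def using \<open>\<epsilon> > 0\<close> \<open>B \<ge> 0\<close> by (auto simp: field_simps add_nonneg_pos)
  have "eventually (\<lambda>S. sum f S > 1 - \<eta>) (finite_subsets_at_top A)"
    using f \<open>\<eta> > 0\<close> unfolding has_sum_def by (intro order_tendstoD) auto
  then obtain S where S: "finite S" "S \<subseteq> A" "sum f S > 1 - \<eta>"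
    unfolding eventually_finite_subsets_at_top by blast
  define R where "R N = (\<Sum>w\<in>S. Z w * cnt N w) + B * (real N - (\<Sum>w\<in>S. cnt N w))" for N
  define X where "X = (\<Sum>w\<in>S. Z w * f w) + B * (1 - sum f S)"
  have "(\<lambda>N. (\<Sum>w\<in>S. Z w * (cnt N w / real N)) + B * (1 - (\<Sum>w\<in>S. cnt N w / real N))) \<longlonglongrightarrow> X"
    unfolding X_def cnt_def using S(2) by (intro tendsto_intros freq) auto
  moreover have "eventually (\<lambda>N. (\<Sum>w\<in>S. Z w * (cnt N w / real N)) + B * (1 - (\<Sum>w\<in>S. cnt N w / real N))
      = R N / real N) sequentially"
    using eventually_gt_at_top[of 0]
    by eventually_elim (simp add: R_def field_simps sum_divide_distrib[symmetric] sum_distrib_left)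
  ultimately have R: "(\<lambda>N. R N / real N) \<longlonglongrightarrow> X"
    using Lim_transform_eventually by fastforce
  have "B * (1 - sum f S) \<le> B * \<eta>"
    using S(3) \<open>B \<ge> 0\<close> by (intro mult_left_mono) auto
  then have "X < E + \<epsilon>"
    using mean[OF S(1,2)] B\<eta> unfolding X_def by linarith
  then have "eventually (\<lambda>N. R N / real N < E + \<epsilon>) sequentially"
    by (rule order_tendstoD[OF R])
  then show ?thesis
  proof eventually_elim
    case (elim N)
    have "(\<Sum>j<N. Z (x j)) \<le> R N"
      unfolding R_def cnt_def using S(1) Z by (intro sum_le_sum_fibre_counts) auto
    then have "(\<Sum>j<N. Z (x j)) / real N \<le> R N / real N"
      by (simp add: divide_right_mono)
    then show ?case using elim by simp
  qed
qed

context
  fixes p :: "'a::countable \<Rightarrow> real"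
  assumes bernoulli: "bernoulli_distr p"
begin

lemma eventually_window_average_le:
  assumes normal: "bernoulli_normal p \<alpha>"
    and "L \<ge> 1" and Z: "\<And>v. 0 \<le> Z v \<and> Z v \<le> B" and "\<epsilon> > 0"
  shows "eventually (\<lambda>N. (\<Sum>j<N. Z (window \<alpha> j L)) / real N \<le> expect (word_pmf p L) Z + \<epsilon>) sequentially"
proof (rule eventually_average_le_of_frequencies[OF has_sum_prod_list_words[OF bernoulli] _ Z _ \<open>\<epsilon> > 0\<close>])
  fix w :: "'a list" assume "w \<in> {w. length w = L}"
  then have w: "length w = L" "w \<noteq> []" using \<open>L \<ge> 1\<close> by auto
  then have "word_freq w \<alpha> \<longlonglongrightarrow> prod_list (map p w)"
    using normal unfolding bernoulli_normal_def by blast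
  then show "(\<lambda>N. real (card {j. j < N \<and> window \<alpha> j L = w}) / real N) \<longlonglongrightarrow> prod_list (map p w)"
    using tendsto_shift_ratio[where k="L - 1"] occ_pref_eq_card_window_starts[OF w(1) \<open>L \<ge> 1\<close>]
    by fastforce
next
  fix S :: "'a list set" assume "finite S" "S \<subseteq> {w. length w = L}"
  have "(\<Sum>w\<in>S. Z w * pmf (word_pmf p L) w) \<le> expect (word_pmf p L) Z"
    by (rule sum_pmf_mult_le_expect[where B=B]) (use \<open>finite S\<close> Z in auto)
  moreover have "(\<Sum>w\<in>S. Z w * pmf (word_pmf p L) w) = (\<Sum>w\<in>S. Z w * prod_list (map p w))"
    using \<open>S \<subseteq> {w. length w = L}\<close> by (intro sum.cong) (auto simp: pmf_word_pmf[OF bernoulli])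
  ultimately show "(\<Sum>w\<in>S. Z w * prod_list (map p w)) \<le> expect (word_pmf p L) Z"
    by simp
qed

end

section \<open>Statistics read along a finite automaton average out\<close>

lemma abs_sum_le_card_mult:
  fixes f :: "'b \<Rightarrow> real" and c :: real
  shows "(\<And>i. i \<in> A \<Longrightarrow> \<bar>f i\<bar> \<le> c) \<Longrightarrow> \<bar>sum f A\<bar> \<le> card A * c"
  by (rule order_trans[OF sum_abs sum_bounded_above])

lemma abs_sum_shift_diff_le:
  fixes X :: "nat \<Rightarrow> real"
  assumes "\<And>i. \<bar>X i\<bar> \<le> 1"
  shows "\<bar>(\<Sum>j<N. X (j + m)) - (\<Sum>i<N. X i)\<bar> \<le> 2 * m"
proof -
  have split: "(\<Sum>i<a + b. X i) = (\<Sum>i<a. X i) + (\<Sum>j<b. X (a + j))" for a b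
    by (induction b) (simp_all add: add.assoc)
  have "\<bar>\<Sum>j<m. X (N + j)\<bar> \<le> m" and "\<bar>\<Sum>i<m. X i\<bar> \<le> m"
    using abs_sum_le_card_mult[of "{..<m}" _ 1] assms by auto
  then show ?thesis
    using split[of m N] split[of N m] by (simp add: add.commute)
qed

lemma abs_sum_le_sum_abs_block_averages:
  fixes X :: "nat \<Rightarrow> real"
  assumes X: "\<And>i. \<bar>X i\<bar> \<le> 1" and "M > 0"
  shows "\<bar>\<Sum>i<N. X i\<bar> \<le> (\<Sum>j<N. \<bar>(\<Sum>m<M. X (j + m)) / M\<bar>) + 2 * M"
proof -
  define A where "A = (\<Sum>j<N. \<Sum>m<M. X (j + m))"
  have "\<bar>(\<Sum>i<N. X i) - (\<Sum>j<N. X (j + m))\<bar> \<le> 2 * real M" if "m < M" for m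
    using abs_sum_shift_diff_le[where X=X and N=N and m=m, OF X] that by (simp add: abs_minus_commute)
  then have "\<bar>\<Sum>m<M. (\<Sum>i<N. X i) - (\<Sum>j<N. X (j + m))\<bar> \<le> real M * (2 * real M)"
    using abs_sum_le_card_mult[of "{..<M}" _ "2 * real M"] by simp
  moreover have "(\<Sum>m<M. (\<Sum>i<N. X i) - (\<Sum>j<N. X (j + m))) = real M * (\<Sum>i<N. X i) - A"
    unfolding A_def by (simp add: sum_subtractf) (rule sum.swap)
  moreover have "\<bar>real M * (\<Sum>i<N. X i)\<bar> \<le> \<bar>real M * (\<Sum>i<N. X i) - A\<bar> + \<bar>A\<bar>"
    by (metis abs_triangle_ineq diff_add_cancel)
  moreover have "(\<Sum>j<N. \<bar>(\<Sum>m<M. X (j + m)) / M\<bar>) = (\<Sum>j<N. \<bar>\<Sum>m<M. X (j + m)\<bar>) / M"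
    by (simp add: abs_divide flip: sum_divide_distrib)
  moreover have "\<bar>A\<bar> \<le> (\<Sum>j<N. \<bar>\<Sum>m<M. X (j + m)\<bar>)"
    unfolding A_def by (rule sum_abs)
  ultimately have "real M * \<bar>\<Sum>i<N. X i\<bar> \<le> real M * ((\<Sum>j<N. \<bar>(\<Sum>m<M. X (j + m)) / M\<bar>) + 2 * M)"
    using \<open>M > 0\<close> by (simp add: abs_mult algebra_simps)
  then show ?thesis
    using \<open>M > 0\<close> by simp
qed

definition dfa_run :: "('q \<Rightarrow> 'a \<Rightarrow> 'q) \<Rightarrow> 'q \<Rightarrow> (nat \<Rightarrow> 'a) \<Rightarrow> nat \<Rightarrow> 'q" where
  "dfa_run \<delta> qs \<alpha> i = foldl \<delta> qs (pref \<alpha> i)"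

lemma dfa_run_add: "dfa_run \<delta> qs \<alpha> (i + m) = foldl \<delta> (dfa_run \<delta> qs \<alpha> i) (window \<alpha> i m)"
  by (simp add: dfa_run_def pref_add)

lemma foldl_in_closed: "q \<in> Q \<Longrightarrow> (\<forall>q\<in>Q. \<forall>a. \<delta> q a \<in> Q) \<Longrightarrow> foldl \<delta> q u \<in> Q"
  by (induction u arbitrary: q) auto

definition block_deviation ::
    "('a \<Rightarrow> real) \<Rightarrow> ('q \<Rightarrow> 'a \<Rightarrow> 'q) \<Rightarrow> ('q \<Rightarrow> 'a list \<Rightarrow> real) \<Rightarrow> nat \<Rightarrow> 'q \<Rightarrow> nat \<Rightarrow> 'a list \<Rightarrow> real"
  where "block_deviation p \<delta> H T r m v =
    H (foldl \<delta> r (take m v)) (take T (drop m v)) - expect (word_pmf p T) (H (foldl \<delta> r (take m v)))"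

definition sum_abs_block_averages ::
    "('a \<Rightarrow> real) \<Rightarrow> ('q \<Rightarrow> 'a \<Rightarrow> 'q) \<Rightarrow> ('q \<Rightarrow> 'a list \<Rightarrow> real) \<Rightarrow> nat \<Rightarrow> 'q set \<Rightarrow> nat \<Rightarrow> 'a list \<Rightarrow> real"
  where "sum_abs_block_averages p \<delta> H T Q M v = (\<Sum>r\<in>Q. \<bar>(\<Sum>m<M. block_deviation p \<delta> H T r m v) / M\<bar>)"

lemma abs_block_deviation_le:
  assumes "\<And>q v. 0 \<le> H q v \<and> H q v \<le> 1"
  shows "\<bar>block_deviation p \<delta> H T r m v\<bar> \<le> 1"
proof -
  let ?q = "foldl \<delta> r (take m v)"
  have "0 \<le> expect (word_pmf p T) (H ?q) \<and> expect (word_pmf p T) (H ?q) \<le> 1"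
    by (rule expect_in_unit_interval) (rule assms)
  then show ?thesis
    using assms[of ?q "take T (drop m v)"] unfolding block_deviation_def by (auto simp: abs_le_iff)
qed

lemma block_deviation_window:
  assumes "m + T \<le> L"
  shows "block_deviation p \<delta> H T (dfa_run \<delta> qs \<alpha> j) m (window \<alpha> j L) =
    H (dfa_run \<delta> qs \<alpha> (j + m)) (window \<alpha> (j + m) T) - expect (word_pmf p T) (H (dfa_run \<delta> qs \<alpha> (j + m)))"
  using assms by (simp add: block_deviation_def take_window take_drop_window dfa_run_add)

context
  fixes p :: "'a::countable \<Rightarrow> real" and \<delta> :: "'q \<Rightarrow> 'a \<Rightarrow> 'q" and H :: "'q \<Rightarrow> 'a list \<Rightarrow> real"
  assumes bernoulli: "bernoulli_distr p"
    and H_range: "\<And>q v. 0 \<le> H q v \<and> H q v \<le> 1"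
begin

lemma abs_block_deviation_mult_le: "\<bar>block_deviation p \<delta> H T r m v * block_deviation p \<delta> H T r m' v\<bar> \<le> 1"
  using abs_block_deviation_le[where H=H, OF H_range] by (simp add: abs_mult mult_le_one)

text \<open>Once the first block is read, the second one starts from a fixed state and is centred.\<close>

lemma block_deviations_uncorrelated:
  assumes "m + T \<le> m'" and "m' + T \<le> L"
  shows "expect (word_pmf p L) (\<lambda>v. block_deviation p \<delta> H T r m v * block_deviation p \<delta> H T r m' v) = 0"
proof -
  let ?Y = "block_deviation p \<delta> H T r"
  have "expect (word_pmf p (m' + (L - m'))) (\<lambda>v. ?Y m v * ?Y m' v)
     = expect (word_pmf p m') (\<lambda>x. expect (word_pmf p (L - m')) (\<lambda>y. ?Y m (x @ y) * ?Y m' (x @ y)))"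
    by (rule expect_word_pmf_add[OF bernoulli abs_block_deviation_mult_le])
  also have "\<dots> = expect (word_pmf p m') (\<lambda>x. 0)"
  proof (rule expect_cong)
    fix x assume "x \<in> set_pmf (word_pmf p m')"
    then have x: "length x = m'" by (rule length_in_set_word_pmf)
    define q where "q = foldl \<delta> r x"
    have first: "?Y m (x @ y) = ?Y m x" for y
      using x assms unfolding block_deviation_def by simp
    have second: "?Y m' (x @ y) = H q (take T y) - expect (word_pmf p T) (H q)" for y
      using x unfolding block_deviation_def q_def by simp
    have "expect (word_pmf p (L - m')) (\<lambda>y. H q (take T y)) = expect (word_pmf p T) (H q)"
      using H_range assms by (intro expect_word_pmf_take[OF bernoulli, where B=1]) (auto simp: abs_le_iff)
    moreover have "integrable (measure_pmf (word_pmf p (L - m'))) (\<lambda>y. H q (take T y))"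
      using H_range by (intro integrable_measure_pmf_bounded[where B=1]) (auto simp: abs_le_iff)
    ultimately show "expect (word_pmf p (L - m')) (\<lambda>y. ?Y m (x @ y) * ?Y m' (x @ y)) = 0"
      unfolding first second by (simp add: right_diff_distrib)
  qed
  finally show ?thesis using assms by simp
qed

lemma expect_square_sum_block_deviations_le:
  "expect (word_pmf p (M + T)) (\<lambda>v. (\<Sum>m<M. block_deviation p \<delta> H T r m v)\<^sup>2) \<le> real M * real (2 * T + 1)"
proof -
  let ?Y = "block_deviation p \<delta> H T r"
  let ?E = "\<lambda>m m'. expect (word_pmf p (M + T)) (\<lambda>v. ?Y m v * ?Y m' v)"
  have "expect (word_pmf p (M + T)) (\<lambda>v. (\<Sum>m<M. ?Y m v)\<^sup>2)
      = expect (word_pmf p (M + T)) (\<lambda>v. \<Sum>m<M. \<Sum>m'<M. ?Y m v * ?Y m' v)"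
    by (simp add: power2_eq_square sum_product)
  also have "\<dots> = (\<Sum>m<M. \<Sum>m'<M. ?E m m')"
    by (subst Bochner_Integration.integral_sum, rule Bochner_Integration.integrable_sum,
        rule integrable_measure_pmf_bounded[OF abs_block_deviation_mult_le])
      (subst Bochner_Integration.integral_sum,
        auto intro: integrable_measure_pmf_bounded[OF abs_block_deviation_mult_le])
  also have "\<dots> \<le> (\<Sum>m<M. real (card {m'\<in>{..<M}. m' \<in> {m - T..m + T}}))"
  proof (rule sum_mono)
    fix m assume "m \<in> {..<M}"
    have "?E m m' = 0" if "m' \<notin> {m - T..m + T}" "m' < M" for m'
      using that block_deviations_uncorrelated[of m T m' "M + T" r]
        block_deviations_uncorrelated[of m' T m "M + T" r] \<open>m \<in> {..<M}\<close>
      by (cases "m + T \<le> m'") (auto simp: mult.commute)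
    then have "(\<Sum>m'<M. ?E m m') = (\<Sum>m'\<in>{m'\<in>{..<M}. m' \<in> {m - T..m + T}}. ?E m m')"
      by (intro sum.mono_neutral_right) auto
    also have "\<dots> \<le> (\<Sum>m'\<in>{m'\<in>{..<M}. m' \<in> {m - T..m + T}}. 1)"
    proof (rule sum_mono)
      fix m'
      show "?E m m' \<le> 1"
        using abs_expect_le[of "\<lambda>v. ?Y m v * ?Y m' v" 1 "word_pmf p (M + T)"]
          abs_block_deviation_mult_le by auto
    qed
    finally show "(\<Sum>m'<M. ?E m m') \<le> real (card {m'\<in>{..<M}. m' \<in> {m - T..m + T}})"
      by simp
  qed
  also have "\<dots> \<le> (\<Sum>m<M. real (2 * T + 1))"
  proof (intro sum_mono)
    fix m
    have "card {m'\<in>{..<M}. m' \<in> {m - T..m + T}} \<le> card {m - T..m + T}"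
      by (rule card_mono) auto
    then show "real (card {m'\<in>{..<M}. m' \<in> {m - T..m + T}}) \<le> real (2 * T + 1)"
      by simp
  qed
  finally show ?thesis by simp
qed

lemma expect_abs_block_average_le:
  assumes "M > 0"
  shows "expect (word_pmf p (M + T)) (\<lambda>v. \<bar>(\<Sum>m<M. block_deviation p \<delta> H T r m v) / M\<bar>)
    \<le> sqrt (real (2 * T + 1) / M)"
proof -
  let ?G = "\<lambda>v. (\<Sum>m<M. block_deviation p \<delta> H T r m v) / M"
  have "\<bar>\<Sum>m<M. block_deviation p \<delta> H T r m v\<bar> \<le> (\<Sum>m<M. 1)" for v
    by (rule order_trans[OF sum_abs sum_mono]) (rule abs_block_deviation_le[where H=H, OF H_range])
  then have "\<bar>?G v\<bar> \<le> 1" for v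
    using assms by (simp add: abs_divide)
  then have "expect (word_pmf p (M + T)) (\<lambda>v. \<bar>?G v\<bar>) \<le> sqrt (expect (word_pmf p (M + T)) (\<lambda>v. (?G v)\<^sup>2))"
    by (rule expect_abs_le_sqrt_expect_square)
  also have "expect (word_pmf p (M + T)) (\<lambda>v. (?G v)\<^sup>2)
      = expect (word_pmf p (M + T)) (\<lambda>v. (\<Sum>m<M. block_deviation p \<delta> H T r m v)\<^sup>2) / (real M)\<^sup>2"
    by (simp add: power_divide)
  also have "\<dots> \<le> real M * real (2 * T + 1) / (real M)\<^sup>2"
    by (intro divide_right_mono expect_square_sum_block_deviations_le) simp
  also have "\<dots> = real (2 * T + 1) / M"
    using assms by (simp add: power2_eq_square)
  finally show ?thesis by (simp add: algebra_simps)
qed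

lemma abs_block_average_le_1:
  assumes "M > 0"
  shows "\<bar>(\<Sum>m<M. block_deviation p \<delta> H T r m v) / M\<bar> \<le> 1"
  using abs_sum_le_card_mult[of "{..<M}" _ 1] abs_block_deviation_le[where H=H, OF H_range] assms
  by (simp add: abs_divide)

lemma sum_abs_block_averages_range:
  assumes "M > 0"
  shows "0 \<le> sum_abs_block_averages p \<delta> H T Q M v \<and> sum_abs_block_averages p \<delta> H T Q M v \<le> card Q"
  using sum_bounded_above[of Q "\<lambda>r. \<bar>(\<Sum>m<M. block_deviation p \<delta> H T r m v) / M\<bar>" 1]
    abs_block_average_le_1[OF assms]
  unfolding sum_abs_block_averages_def by (auto intro: sum_nonneg)

lemma expect_sum_abs_block_averages_le:
  assumes "finite Q" and "M > 0"
  shows "expect (word_pmf p (M + T)) (sum_abs_block_averages p \<delta> H T Q M)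
    \<le> card Q * sqrt (real (2 * T + 1) / M)"
proof -
  have "expect (word_pmf p (M + T)) (sum_abs_block_averages p \<delta> H T Q M)
      = (\<Sum>r\<in>Q. expect (word_pmf p (M + T)) (\<lambda>v. \<bar>(\<Sum>m<M. block_deviation p \<delta> H T r m v) / M\<bar>))"
    unfolding sum_abs_block_averages_def using abs_block_average_le_1[OF \<open>M > 0\<close>]
    by (intro Bochner_Integration.integral_sum integrable_measure_pmf_bounded[where B=1]) auto
  also have "\<dots> \<le> (\<Sum>r\<in>Q. sqrt (real (2 * T + 1) / M))"
    by (intro sum_mono expect_abs_block_average_le[OF \<open>M > 0\<close>])
  finally show ?thesis by simp
qed

text \<open>Averaging each term over a block of \<open>M\<close> later positions costs \<open>O(M)\<close>, and a block
  average only depends on the state at the start of the block and the next \<open>M + T\<close> letters.\<close>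

lemma abs_sum_dfa_deviations_le:
  assumes "M > 0" and Q: "finite Q" "\<forall>q\<in>Q. \<forall>a. \<delta> q a \<in> Q" "qs \<in> Q"
  shows "\<bar>\<Sum>i<N. H (dfa_run \<delta> qs \<alpha> i) (window \<alpha> i T) - expect (word_pmf p T) (H (dfa_run \<delta> qs \<alpha> i))\<bar>
    \<le> (\<Sum>j<N. sum_abs_block_averages p \<delta> H T Q M (window \<alpha> j (M + T))) + 2 * M"
proof -
  define s where "s = dfa_run \<delta> qs \<alpha>"
  define X where "X i = H (s i) (window \<alpha> i T) - expect (word_pmf p T) (H (s i))" for i
  have X: "\<bar>X i\<bar> \<le> 1" for i
  proof -
    have "0 \<le> expect (word_pmf p T) (H (s i)) \<and> expect (word_pmf p T) (H (s i)) \<le> 1"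
      by (rule expect_in_unit_interval) (rule H_range)
    then show ?thesis
      using H_range[of "s i" "window \<alpha> i T"] unfolding X_def by (auto simp: abs_le_iff)
  qed
  have "\<bar>(\<Sum>m<M. X (j + m)) / M\<bar> \<le> sum_abs_block_averages p \<delta> H T Q M (window \<alpha> j (M + T))" for j
  proof -
    have "s j \<in> Q" unfolding s_def dfa_run_def by (rule foldl_in_closed[OF Q(3,2)])
    have "(\<Sum>m<M. X (j + m)) = (\<Sum>m<M. block_deviation p \<delta> H T (s j) m (window \<alpha> j (M + T)))"
      unfolding X_def s_def by (intro sum.cong) (auto simp: block_deviation_window)
    then have "\<bar>(\<Sum>m<M. X (j + m)) / M\<bar>
        = \<bar>(\<Sum>m<M. block_deviation p \<delta> H T (s j) m (window \<alpha> j (M + T))) / M\<bar>"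
      by simp
    also have "\<dots> \<le> sum_abs_block_averages p \<delta> H T Q M (window \<alpha> j (M + T))"
      unfolding sum_abs_block_averages_def by (rule member_le_sum) (auto simp: Q(1) \<open>s j \<in> Q\<close>)
    finally show ?thesis .
  qed
  then have "(\<Sum>j<N. \<bar>(\<Sum>m<M. X (j + m)) / M\<bar>)
      \<le> (\<Sum>j<N. sum_abs_block_averages p \<delta> H T Q M (window \<alpha> j (M + T)))"
    by (rule sum_mono)
  then show ?thesis
    using abs_sum_le_sum_abs_block_averages[where X=X and N=N, OF X \<open>M > 0\<close>]
    unfolding X_def s_def sum_subtractf by linarith
qed

text \<open>By normality the average of block statistics is bounded by their mean, which is
  \<open>O(1 / sqrt M)\<close> by the variance estimate for uncorrelated block deviations.\<close>

lemma dfa_deviation_average_tendsto_0: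
  assumes normal: "bernoulli_normal p \<alpha>"
    and Q: "finite Q" "\<forall>q\<in>Q. \<forall>a. \<delta> q a \<in> Q" "qs \<in> Q"
  shows "(\<lambda>N. (\<Sum>i<N. H (dfa_run \<delta> qs \<alpha> i) (window \<alpha> i T)
                - expect (word_pmf p T) (H (dfa_run \<delta> qs \<alpha> i))) / real N) \<longlonglongrightarrow> 0"
proof (rule tendstoI)
  fix \<epsilon> :: real assume "\<epsilon> > 0"
  define \<kappa> where "\<kappa> = \<epsilon> / (3 * (card Q + 1))"
  have "\<kappa> > 0" unfolding \<kappa>_def using \<open>\<epsilon> > 0\<close> by simp
  obtain M :: nat where M: "real (2 * T + 1) / \<kappa>\<^sup>2 < M" using reals_Archimedean2 by blast
  moreover have "0 < real (2 * T + 1) / \<kappa>\<^sup>2" using \<open>\<kappa> > 0\<close> by simp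
  ultimately have "M > 0" by linarith
  have "real (2 * T + 1) / M \<le> \<kappa>\<^sup>2"
    using M \<open>\<kappa> > 0\<close> \<open>M > 0\<close> by (simp add: field_simps)
  then have "sqrt (real (2 * T + 1) / M) \<le> \<kappa>"
    using \<open>\<kappa> > 0\<close> real_sqrt_le_mono[of _ "\<kappa>\<^sup>2"] by simp
  define Z where "Z = sum_abs_block_averages p \<delta> H T Q M"
  have "expect (word_pmf p (M + T)) Z \<le> card Q * \<kappa>"
    unfolding Z_def using expect_sum_abs_block_averages_le[OF Q(1) \<open>M > 0\<close>, of T]
      mult_left_mono[OF \<open>sqrt (real (2 * T + 1) / M) \<le> \<kappa>\<close>, of "card Q"] by simp
  also have "\<dots> \<le> \<epsilon> / 3" unfolding \<kappa>_def using \<open>\<epsilon> > 0\<close> by (simp add: field_simps)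
  finally have EZ: "expect (word_pmf p (M + T)) Z \<le> \<epsilon> / 3" .
  have "eventually (\<lambda>N. 2 * real M / real N < \<epsilon> / 3) sequentially"
    using \<open>\<epsilon> > 0\<close> by (intro order_tendstoD[OF lim_const_over_n]) auto
  moreover have "eventually (\<lambda>N. (\<Sum>j<N. Z (window \<alpha> j (M + T))) / real N
      \<le> expect (word_pmf p (M + T)) Z + \<epsilon> / 3) sequentially"
    using \<open>\<epsilon> > 0\<close> \<open>M > 0\<close> sum_abs_block_averages_range[OF \<open>M > 0\<close>]
    by (intro eventually_window_average_le[OF bernoulli normal]) (auto simp: Z_def)
  ultimately show "eventually (\<lambda>N. dist ((\<Sum>i<N. H (dfa_run \<delta> qs \<alpha> i) (window \<alpha> i T)
      - expect (word_pmf p T) (H (dfa_run \<delta> qs \<alpha> i))) / real N) 0 < \<epsilon>) sequentially"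
    using eventually_gt_at_top[of 0]
  proof eventually_elim
    case (elim N)
    have "dist ((\<Sum>i<N. H (dfa_run \<delta> qs \<alpha> i) (window \<alpha> i T)
        - expect (word_pmf p T) (H (dfa_run \<delta> qs \<alpha> i))) / real N) 0
      \<le> (\<Sum>j<N. Z (window \<alpha> j (M + T))) / real N + 2 * real M / real N"
      using abs_sum_dfa_deviations_le[OF \<open>M > 0\<close> Q, where N=N and \<alpha>=\<alpha> and T=T] elim(3)
      by (simp add: dist_real_def abs_divide Z_def add_divide_distrib[symmetric] divide_right_mono)
    then show ?case using elim EZ by linarith
  qed
qed

end

definition count_below :: "nat set \<Rightarrow> nat \<Rightarrow> nat" where
  "count_below P K = card {i. i \<in> P \<and> i < K}"

context
  fixes P :: "nat set"
  assumes infinite: "infinite P"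
begin

lemma card_filter_eq_card_enumerate:
  "card {i. i \<in> P \<and> i < K \<and> R i} = card {k. enumerate P k < K \<and> R (enumerate P k)}"
proof -
  have "{i. i \<in> P \<and> i < K \<and> R i} = enumerate P ` {k. enumerate P k < K \<and> R (enumerate P k)}"
    using enumerate_Ex[OF infinite] enumerate_in_set[OF infinite] by blast
  then show ?thesis by (simp add: card_image inj_on_subset[OF inj_enumerate[OF infinite]])
qed

lemma count_below_enumerate: "count_below P (enumerate P J) = J"
  using card_filter_eq_card_enumerate[where K="enumerate P J" and R="\<lambda>_. True"] infinite
  by (simp add: count_below_def)

lemma enumerate_less_iff_less_count_below: "enumerate P k < K \<longleftrightarrow> k < count_below P K"
proof
  assume "enumerate P k < K"
  then have "insert (enumerate P k) {i. i \<in> P \<and> i < enumerate P k} \<subseteq> {i. i \<in> P \<and> i < K}"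
    using enumerate_in_set[OF infinite] by auto
  then have "card (insert (enumerate P k) {i. i \<in> P \<and> i < enumerate P k}) \<le> count_below P K"
    unfolding count_below_def by (intro card_mono) auto
  then show "k < count_below P K"
    using count_below_enumerate[of k] by (simp add: count_below_def)
next
  assume "k < count_below P K"
  show "enumerate P k < K"
  proof (rule ccontr)
    assume "\<not> enumerate P k < K"
    then have "count_below P K \<le> count_below P (enumerate P k)"
      unfolding count_below_def by (intro card_mono) auto
    then show False using \<open>k < count_below P K\<close> count_below_enumerate by simp
  qed
qed

lemma filterlim_count_below: "filterlim (count_below P) at_top sequentially"
  unfolding filterlim_at_top
proof
  fix J
  show "eventually (\<lambda>K. J \<le> count_below P K) sequentially"
  proof (rule eventually_mono[OF eventually_gt_at_top[of "enumerate P J"]])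
    show "J \<le> count_below P K" if "enumerate P J < K" for K
      using enumerate_less_iff_less_count_below[of J K] that by simp
  qed
qed

lemma letter_freq_enumerate_iff:
  fixes x :: real
  shows "(\<lambda>K. real (card {i. i \<in> P \<and> i < K \<and> \<alpha> i = a}) / real (count_below P K)) \<longlonglongrightarrow> x
    \<longleftrightarrow> word_freq [a] (\<lambda>k. \<alpha> (enumerate P k)) \<longlonglongrightarrow> x"
proof -
  have count: "card {i. i \<in> P \<and> i < K \<and> \<alpha> i = a} = occ [a] (pref (\<lambda>k. \<alpha> (enumerate P k)) (count_below P K))"
    for K
    unfolding card_filter_eq_card_enumerate occ_singleton_pref enumerate_less_iff_less_count_below ..
  have enumerate: "filterlim (enumerate P) at_top sequentially"
    by (rule filterlim_subseq) (simp add: strict_mono_def infinite)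
  show ?thesis
    unfolding count
  proof
    assume "(\<lambda>K. word_freq [a] (\<lambda>k. \<alpha> (enumerate P k)) (count_below P K)) \<longlonglongrightarrow> x"
    from filterlim_compose[OF this enumerate]
    show "word_freq [a] (\<lambda>k. \<alpha> (enumerate P k)) \<longlonglongrightarrow> x"
      by (simp add: count_below_enumerate o_def)
  qed (rule filterlim_compose[OF _ filterlim_count_below])
qed

end

section \<open>Selecting from selected sequences\<close>

definition select_word :: "'a list set \<Rightarrow> 'a list \<Rightarrow> 'a list" where
  "select_word S u = map ((!) u) (filter (\<lambda>i. take i u \<in> S) [0..<length u])"

definition strategy_comp :: "'a list set \<Rightarrow> 'a list set \<Rightarrow> 'a list set" where
  "strategy_comp S1 S2 = {u. u \<in> S1 \<and> select_word S1 u \<in> S2}"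

lemma select_word_Nil [simp]: "select_word S [] = []"
  by (simp add: select_word_def)

lemma select_word_snoc: "select_word S (u @ [a]) = select_word S u @ (if u \<in> S then [a] else [])"
proof -
  have "filter (\<lambda>i. take i (u @ [a]) \<in> S) [0..<length u] = filter (\<lambda>i. take i u \<in> S) [0..<length u]"
    by (rule filter_cong) auto
  moreover have "map ((!) (u @ [a])) (filter (\<lambda>i. take i u \<in> S) [0..<length u])
      = map ((!) u) (filter (\<lambda>i. take i u \<in> S) [0..<length u])"
    by (rule map_cong) (auto simp: nth_append)
  ultimately show ?thesis unfolding select_word_def by simp
qed

lemma select_word_pref:
  assumes infinite: "infinite (sel_positions S \<alpha>)"
  shows "select_word S (pref \<alpha> n) = pref (selected S \<alpha>) (count_below (sel_positions S \<alpha>) n)"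
proof (induction n)
  case 0
  then show ?case by (simp add: pref_def count_below_def)
next
  case (Suc n)
  let ?P = "sel_positions S \<alpha>"
  have "{i. i \<in> ?P \<and> i < Suc n} = (if n \<in> ?P then insert n {i. i \<in> ?P \<and> i < n} else {i. i \<in> ?P \<and> i < n})"
    by (auto simp: less_Suc_eq)
  then have count: "count_below ?P (Suc n) = (if n \<in> ?P then Suc (count_below ?P n) else count_below ?P n)"
    unfolding count_below_def by simp
  show ?case
  proof (cases "n \<in> ?P")
    case True
    then obtain j where "enumerate ?P j = n" using enumerate_Ex[OF infinite] by blast
    then have "count_below ?P n = j" using count_below_enumerate[OF infinite] by blast
    then show ?thesis
      using Suc.IH True count \<open>enumerate ?P j = n\<close>
      by (simp add: pref_Suc select_word_snoc selected_def sel_positions_def)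
  next
    case False
    then show ?thesis using Suc.IH count by (simp add: pref_Suc select_word_snoc sel_positions_def)
  qed
qed

lemma Least_image_strict_mono:
  fixes t :: "'a::wellorder \<Rightarrow> 'b::wellorder"
  assumes "strict_mono t" and "P \<noteq> {}"
  shows "(LEAST x. x \<in> t ` P) = t (LEAST x. x \<in> P)"
proof (rule Least_equality)
  show "t (LEAST x. x \<in> P) \<in> t ` P"
    using assms(2) LeastI[of "\<lambda>x. x \<in> P"] by blast
  show "t (LEAST x. x \<in> P) \<le> y" if "y \<in> t ` P" for y
  proof -
    obtain x where "x \<in> P" and "y = t x" using \<open>y \<in> t ` P\<close> by blast
    then show ?thesis using Least_le[of "\<lambda>x. x \<in> P" x] strict_mono_less_eq[OF assms(1)] by simp
  qed
qed

lemma enumerate_image_strict_mono: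
  fixes t :: "'a::wellorder \<Rightarrow> 'b::wellorder"
  assumes "strict_mono t" and "infinite P"
  shows "enumerate (t ` P) n = t (enumerate P n)"
  using assms(2)
proof (induction n arbitrary: P)
  case 0
  then have "P \<noteq> {}" by auto
  then show ?case by (simp add: enumerate_0 Least_image_strict_mono[OF assms(1)])
next
  case (Suc n)
  let ?m = "LEAST x. x \<in> P"
  have "P \<noteq> {}" using Suc.prems by auto
  then have "enumerate (t ` P) (Suc n) = enumerate (t ` P - {t ?m}) n"
    by (simp add: enumerate_Suc Least_image_strict_mono[OF assms(1)])
  also have "t ` P - {t ?m} = t ` (P - {?m})"
    using strict_mono_imp_inj_on[OF assms(1)] by (auto dest: injD)
  also have "enumerate (t ` (P - {?m})) n = t (enumerate (P - {?m}) n)"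
    by (rule Suc.IH) (use Suc.prems in simp)
  finally show ?case by (simp add: enumerate_Suc)
qed

context
  fixes S1 S2 :: "'a list set" and \<alpha> :: "nat \<Rightarrow> 'a"
  assumes infinite: "infinite (sel_positions S1 \<alpha>)"
begin

lemma sel_positions_strategy_comp:
  "sel_positions (strategy_comp S1 S2) \<alpha> = enumerate (sel_positions S1 \<alpha>) ` sel_positions S2 (selected S1 \<alpha>)"
    (is "?L = ?t ` ?P2")
proof
  have select: "select_word S1 (pref \<alpha> (?t k)) = pref (selected S1 \<alpha>) k" for k
    using select_word_pref[OF infinite] count_below_enumerate[OF infinite] by simp
  show "?L \<subseteq> ?t ` ?P2"
  proof
    fix i assume "i \<in> ?L"
    then have "i \<in> sel_positions S1 \<alpha>" and "select_word S1 (pref \<alpha> i) \<in> S2"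
      by (auto simp: sel_positions_def strategy_comp_def)
    moreover obtain k where "?t k = i" using enumerate_Ex[OF infinite] calculation(1) by blast
    ultimately show "i \<in> ?t ` ?P2" using select[of k] by (auto simp: sel_positions_def)
  qed
  show "?t ` ?P2 \<subseteq> ?L"
    using select enumerate_in_set[OF infinite] by (auto simp: sel_positions_def strategy_comp_def)
qed

lemma sel_infinite_strategy_comp_iff:
  "sel_infinite (strategy_comp S1 S2) \<alpha> \<longleftrightarrow> sel_infinite S2 (selected S1 \<alpha>)"
  unfolding sel_infinite_def sel_positions_strategy_comp
  using finite_imageD[OF _ inj_on_subset[OF inj_enumerate[OF infinite]]] by blast

lemma selected_strategy_comp:
  assumes "sel_infinite S2 (selected S1 \<alpha>)"
  shows "selected (strategy_comp S1 S2) \<alpha> = selected S2 (selected S1 \<alpha>)"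
  using assms unfolding sel_infinite_def
  by (simp add: selected_def[of "strategy_comp S1 S2"] sel_positions_strategy_comp
      enumerate_image_strict_mono[OF strict_mono_enumerate[OF infinite]] selected_def)

end

section \<open>Automata for composed and Postnikova strategies\<close>

text \<open>The product automaton: the second component only moves on letters selected by the first.\<close>

lemma dfa_strategy_comp:
  assumes "is_dfa Q1 \<delta>1 q1 F1" and "is_dfa Q2 \<delta>2 q2 F2"
  shows "\<exists>Q \<delta> qs F. is_dfa Q \<delta> qs F \<and>
    dfa_strategy \<delta> qs F = strategy_comp (dfa_strategy \<delta>1 q1 F1) (dfa_strategy \<delta>2 q2 F2)"
proof -
  define S1 where "S1 = dfa_strategy \<delta>1 q1 F1"
  define \<delta> where "\<delta> n a = (case prod_decode n of (x, y) \<Rightarrow>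
      prod_encode (\<delta>1 x a, if x \<in> F1 then \<delta>2 y a else y))" for n a
  define qs where "qs = prod_encode (q1, q2)"
  have run: "foldl \<delta> qs u = prod_encode (foldl \<delta>1 q1 u, foldl \<delta>2 q2 (select_word S1 u))" for u
  proof (induction u rule: rev_induct)
    case Nil
    then show ?case by (simp add: qs_def)
  next
    case (snoc a u)
    have "u \<in> S1 \<longleftrightarrow> foldl \<delta>1 q1 u \<in> F1" by (simp add: S1_def dfa_strategy_def)
    then show ?case using snoc by (simp add: select_word_snoc \<delta>_def)
  qed
  have "is_dfa (prod_encode ` (Q1 \<times> Q2)) \<delta> qs (prod_encode ` (F1 \<times> F2))"
    using assms unfolding is_dfa_def qs_def \<delta>_def by auto
  moreover have "dfa_strategy \<delta> qs (prod_encode ` (F1 \<times> F2)) = strategy_comp S1 (dfa_strategy \<delta>2 q2 F2)"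
    unfolding dfa_strategy_def strategy_comp_def run
    using inj_prod_encode[of UNIV] by (auto simp: S1_def dfa_strategy_def dest: inj_onD)
  ultimately show ?thesis unfolding S1_def by blast
qed

definition take_last :: "nat \<Rightarrow> 'b list \<Rightarrow> 'b list" where
  "take_last k xs = drop (length xs - k) xs"

lemma take_last_append_take_last: "take_last k (take_last k xs @ ys) = take_last k (xs @ ys)"
proof -
  have rev: "take_last k zs = rev (take k (rev zs))" for zs :: "'b list"
    by (simp add: take_last_def take_rev)
  show ?thesis unfolding rev by (simp add: take_append min_def)
qed

lemma length_take_last_le: "length (take_last k xs) \<le> k"
  by (simp add: take_last_def)

lemma set_take_last_subset: "set (take_last k xs) \<subseteq> set xs"
  by (simp add: take_last_def set_drop_subset)

lemma take_last_marked_eq_iff: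
  "take_last (length w) (map (\<lambda>a. if a \<in> set w then Some a else None) u) = map Some w
    \<longleftrightarrow> (\<exists>v. u = v @ w)"
proof
  define g where "g a = (if a \<in> set w then Some a else None)" for a
  assume "take_last (length w) (map (\<lambda>a. if a \<in> set w then Some a else None) u) = map Some w"
  moreover define s where "s = drop (length u - length w) u"
  ultimately have gs: "map g s = map Some w"
    unfolding take_last_def g_def by (simp add: drop_map)
  then have "length s = length w" by (metis length_map)
  moreover have "s ! i = w ! i" if "i < length s" for i
    using gs that calculation nth_map[of i s g] nth_map[of i w Some] by (auto simp: g_def split: if_splits)
  ultimately have "s = w" by (rule nth_equalityI)
  then show "\<exists>v. u = v @ w" unfolding s_def by (metis append_take_drop_id)
next
  assume "\<exists>v. u = v @ w"
  then show "take_last (length w) (map (\<lambda>a. if a \<in> set w then Some a else None) u) = map Some w"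
    by (auto simp: take_last_def)
qed

text \<open>The automaton remembers the last \<open>length w\<close> letters, with letters not occurring in
  \<open>w\<close> identified; states are coded as natural numbers, which is where the countability of
  the alphabet is used.\<close>

lemma postnikova_eq_dfa_strategy:
  fixes w :: "'a::countable list"
  shows "\<exists>Q \<delta> qs F. is_dfa Q \<delta> qs F \<and> dfa_strategy \<delta> qs F = postnikova w"
proof -
  define k where "k = length w"
  define g where "g a = (if a \<in> set w then Some a else None)" for a
  define \<delta> where "\<delta> n a = to_nat (take_last k ((from_nat n :: 'a option list) @ [g a]))" for n a
  define qs where "qs = to_nat ([] :: 'a option list)"
  define F where "F = {to_nat (map Some w)}"
  define LS where "LS = {l :: 'a option list. set l \<subseteq> insert None (Some ` set w) \<and> length l \<le> k}"
  have run: "foldl \<delta> qs u = to_nat (take_last k (map g u))" for u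
  proof (induction u rule: rev_induct)
    case Nil
    then show ?case by (simp add: qs_def take_last_def)
  next
    case (snoc a u)
    then show ?case by (simp add: \<delta>_def take_last_append_take_last)
  qed
  have "\<delta> q a \<in> to_nat ` LS" if "q \<in> to_nat ` LS" for q a
  proof -
    obtain l where "l \<in> LS" and "q = to_nat l" using \<open>q \<in> to_nat ` LS\<close> by blast
    moreover have "g a \<in> insert None (Some ` set w)" by (simp add: g_def)
    ultimately have "take_last k (l @ [g a]) \<in> LS"
      using set_take_last_subset[of k "l @ [g a]"] length_take_last_le[of k "l @ [g a]"]
      unfolding LS_def by auto
    then show ?thesis unfolding \<delta>_def \<open>q = to_nat l\<close> by simp
  qed
  moreover have "finite LS" unfolding LS_def by (rule finite_lists_length_le) simp
  moreover have "[] \<in> LS" and "map Some w \<in> LS" unfolding LS_def k_def by auto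
  ultimately have "is_dfa (to_nat ` LS) \<delta> qs F"
    unfolding is_dfa_def qs_def F_def by blast
  moreover have "take_last k (map g u) = map Some w \<longleftrightarrow> u \<in> postnikova w" for u
    unfolding k_def g_def postnikova_def using take_last_marked_eq_iff by blast
  then have "dfa_strategy \<delta> qs F = postnikova w"
    unfolding dfa_strategy_def run F_def by auto
  ultimately show ?thesis by blast
qed

lemma sel_positions_postnikova:
  "i \<in> sel_positions (postnikova w) \<alpha> \<longleftrightarrow> length w \<le> i \<and> window \<alpha> (i - length w) (length w) = w"
proof -
  have drop: "drop (i - length w) (pref \<alpha> i) = window \<alpha> (i - length w) (length w)" if "length w \<le> i"
    using that by (simp add: pref_def window_def drop_map)
  show ?thesis
  proof
    assume "i \<in> sel_positions (postnikova w) \<alpha>"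
    then obtain v where v: "pref \<alpha> i = v @ w" by (auto simp: sel_positions_def postnikova_def)
    then have "length w \<le> i" by (metis le_add2 length_append length_pref)
    moreover have "drop (i - length w) (pref \<alpha> i) = w"
      using v by (metis append_eq_conv_conj length_append length_pref add_diff_cancel_right')
    ultimately show "length w \<le> i \<and> window \<alpha> (i - length w) (length w) = w" using drop by simp
  next
    assume "length w \<le> i \<and> window \<alpha> (i - length w) (length w) = w"
    then have "pref \<alpha> i = take (i - length w) (pref \<alpha> i) @ w" using drop by (metis append_take_drop_id)
    then show "i \<in> sel_positions (postnikova w) \<alpha>" by (auto simp: sel_positions_def postnikova_def)
  qed
qed

lemma card_postnikova_letter:
  "card {i. i \<in> sel_positions (postnikova w) \<alpha> \<and> i < K \<and> \<alpha> i = a} = occ (w @ [a]) (pref \<alpha> K)"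
proof -
  have "{i. i \<in> sel_positions (postnikova w) \<alpha> \<and> i < K \<and> \<alpha> i = a}
      = (\<lambda>j. j + length w) ` {j. j + length (w @ [a]) \<le> K \<and> window \<alpha> j (length (w @ [a])) = w @ [a]}"
  proof (intro set_eqI iffI)
    fix i assume "i \<in> {i. i \<in> sel_positions (postnikova w) \<alpha> \<and> i < K \<and> \<alpha> i = a}"
    then show "i \<in> (\<lambda>j. j + length w) ` {j. j + length (w @ [a]) \<le> K \<and> window \<alpha> j (length (w @ [a])) = w @ [a]}"
      by (intro image_eqI[of _ _ "i - length w"]) (auto simp: sel_positions_postnikova window_Suc)
  qed (auto simp: sel_positions_postnikova window_Suc)
  then show ?thesis unfolding occ_pref_eq_card_windows[of "w @ [a]"] by (simp add: card_image)
qed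

lemma count_below_postnikova:
  "count_below (sel_positions (postnikova w) \<alpha>) (Suc K) = occ w (pref \<alpha> K)"
proof -
  have "{i. i \<in> sel_positions (postnikova w) \<alpha> \<and> i < Suc K}
      = (\<lambda>j. j + length w) ` {j. j + length w \<le> K \<and> window \<alpha> j (length w) = w}"
  proof (intro set_eqI iffI)
    fix i assume "i \<in> {i. i \<in> sel_positions (postnikova w) \<alpha> \<and> i < Suc K}"
    then show "i \<in> (\<lambda>j. j + length w) ` {j. j + length w \<le> K \<and> window \<alpha> j (length w) = w}"
      by (intro image_eqI[of _ _ "i - length w"]) (auto simp: sel_positions_postnikova)
  qed (auto simp: sel_positions_postnikova)
  then show ?thesis unfolding occ_pref_eq_card_windows[of w] count_below_def by (simp add: card_image)
qed

lemma sel_infinite_postnikova: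
  assumes "word_freq w \<alpha> \<longlonglongrightarrow> m" and "m > 0"
  shows "sel_infinite (postnikova w) \<alpha>"
proof (rule ccontr)
  let ?P = "sel_positions (postnikova w) \<alpha>"
  assume "\<not> sel_infinite (postnikova w) \<alpha>"
  then have "finite ?P" unfolding sel_infinite_def by simp
  then have "occ w (pref \<alpha> K) \<le> card ?P" for K
    unfolding count_below_postnikova[symmetric] count_below_def by (intro card_mono) auto
  then have "word_freq w \<alpha> K \<le> real (card ?P) / real K" for K
    by (simp add: divide_right_mono)
  moreover have "(\<lambda>K. real (card ?P) / real K) \<longlonglongrightarrow> 0"
    by (rule lim_const_over_n)
  ultimately have "m \<le> 0"
    using assms(1) by (intro tendsto_le[OF _ _ assms(1)]) auto
  then show False using \<open>m > 0\<close> by simp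
qed

lemma word_freq_snoc_tendsto:
  assumes w: "word_freq w \<alpha> \<longlonglongrightarrow> m"
    and infinite: "sel_infinite (postnikova w) \<alpha>"
    and a: "word_freq [a] (selected (postnikova w) \<alpha>) \<longlonglongrightarrow> x"
  shows "word_freq (w @ [a]) \<alpha> \<longlonglongrightarrow> m * x"
proof -
  let ?P = "sel_positions (postnikova w) \<alpha>"
  define C where "C K = real (count_below ?P K)" for K
  have "infinite ?P" using infinite unfolding sel_infinite_def .
  have ratio: "(\<lambda>K. real (occ (w @ [a]) (pref \<alpha> K)) / C K) \<longlonglongrightarrow> x"
    using letter_freq_enumerate_iff[OF \<open>infinite ?P\<close>, of \<alpha> a x] a
    unfolding C_def card_postnikova_letter selected_def by simp
  have bounds: "C K \<le> real (occ w (pref \<alpha> K)) \<and> real (occ w (pref \<alpha> K)) \<le> C K + 1" for K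
  proof -
    have "count_below ?P (Suc K) \<le> card (insert K {i. i \<in> ?P \<and> i < K})"
      unfolding count_below_def by (rule card_mono) auto
    also have "\<dots> \<le> count_below ?P K + 1"
      unfolding count_below_def by (simp add: card_insert_if)
    finally have "count_below ?P (Suc K) \<le> count_below ?P K + 1" .
    moreover have "count_below ?P K \<le> count_below ?P (Suc K)"
      unfolding count_below_def by (rule card_mono) auto
    ultimately show ?thesis unfolding C_def count_below_postnikova by simp
  qed
  have "\<bar>C K / real K - word_freq w \<alpha> K\<bar> \<le> 1 / real K" for K
    unfolding diff_divide_distrib[symmetric] abs_divide abs_of_nat
    using bounds[of K] by (intro divide_right_mono) (auto simp: abs_le_iff)
  then have "(\<lambda>K. C K / real K - word_freq w \<alpha> K) \<longlonglongrightarrow> 0"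
    by (intro Lim_null_comparison[OF always_eventually lim_const_over_n[of 1]]) simp
  then have "(\<lambda>K. C K / real K) \<longlonglongrightarrow> m"
    by (rule Lim_transform[OF w])
  then have "(\<lambda>K. real (occ (w @ [a]) (pref \<alpha> K)) / C K * (C K / real K)) \<longlonglongrightarrow> x * m"
    by (rule tendsto_mult[OF ratio])
  moreover have "real (occ (w @ [a]) (pref \<alpha> K)) / C K * (C K / real K) = word_freq (w @ [a]) \<alpha> K" for K
  proof (cases "C K = 0")
    case True
    then have "{i. i \<in> ?P \<and> i < K \<and> \<alpha> i = a} = {}"
      unfolding C_def count_below_def by auto
    then show ?thesis using True unfolding card_postnikova_letter[symmetric] by simp
  qed simp
  ultimately show ?thesis by (simp add: mult.commute)
qed

section \<open>Automatic selection preserves normality\<close>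

lemma prod_list_map_pos: "(\<And>a. p a > (0::real)) \<Longrightarrow> prod_list (map p u) > 0"
  by (induction u) auto

lemma sel_positions_dfa_strategy: "i \<in> sel_positions (dfa_strategy \<delta> qs F) \<alpha> \<longleftrightarrow> dfa_run \<delta> qs \<alpha> i \<in> F"
  by (simp add: sel_positions_def dfa_strategy_def dfa_run_def)

lemma count_below_add_le: "count_below P (K + T) \<le> count_below P K + T"
proof -
  have "{i. i \<in> P \<and> i < K + T} \<subseteq> {i. i \<in> P \<and> i < K} \<union> {K..<K + T}" by auto
  then have "count_below P (K + T) \<le> card ({i. i \<in> P \<and> i < K} \<union> {K..<K + T})"
    unfolding count_below_def by (intro card_mono) auto
  also have "\<dots> \<le> count_below P K + T"
    unfolding count_below_def using card_Un_le[of _ "{K..<K + T}"] by simp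
  finally show ?thesis .
qed

definition hit_indicator :: "('q \<Rightarrow> 'a \<Rightarrow> 'q) \<Rightarrow> 'q set \<Rightarrow> nat \<Rightarrow> 'q \<Rightarrow> 'a list \<Rightarrow> real" where
  "hit_indicator \<delta> F T q v = (if \<exists>t<T. foldl \<delta> q (take t v) \<in> F then 1 else 0)"

lemma hit_indicator_range: "0 \<le> hit_indicator \<delta> F T q v \<and> hit_indicator \<delta> F T q v \<le> 1"
  by (simp add: hit_indicator_def)

lemma sum_hit_indicator_le:
  "(\<Sum>i<K. hit_indicator \<delta> F T (dfa_run \<delta> qs \<alpha> i) (window \<alpha> i T))
    \<le> real T * count_below (sel_positions (dfa_strategy \<delta> qs F) \<alpha>) (K + T)"
proof -
  let ?P = "sel_positions (dfa_strategy \<delta> qs F) \<alpha>"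
  let ?hit = "\<lambda>i t. if i + t \<in> ?P then 1 else 0 :: real"
  have "hit_indicator \<delta> F T (dfa_run \<delta> qs \<alpha> i) (window \<alpha> i T) \<le> (\<Sum>t<T. ?hit i t)" for i
  proof (cases "\<exists>t<T. foldl \<delta> (dfa_run \<delta> qs \<alpha> i) (take t (window \<alpha> i T)) \<in> F")
    case True
    then obtain t where "t < T" and "foldl \<delta> (dfa_run \<delta> qs \<alpha> i) (take t (window \<alpha> i T)) \<in> F" by blast
    then have "i + t \<in> ?P" by (simp add: sel_positions_dfa_strategy dfa_run_add take_window)
    then have "1 \<le> (\<Sum>t<T. ?hit i t)"
      using member_le_sum[of t "{..<T}" "?hit i"] \<open>t < T\<close> by auto
    then show ?thesis using True unfolding hit_indicator_def by simp
  next
    case False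
    then have "hit_indicator \<delta> F T (dfa_run \<delta> qs \<alpha> i) (window \<alpha> i T) = 0"
      unfolding hit_indicator_def by auto
    then show ?thesis by (simp add: sum_nonneg)
  qed
  then have "(\<Sum>i<K. hit_indicator \<delta> F T (dfa_run \<delta> qs \<alpha> i) (window \<alpha> i T)) \<le> (\<Sum>t<T. \<Sum>i<K. ?hit i t)"
    by (subst sum.swap) (rule sum_mono)
  also have "\<dots> \<le> (\<Sum>t<T. real (count_below ?P (K + T)))"
  proof (rule sum_mono)
    fix t assume "t \<in> {..<T}"
    have "(\<Sum>i<K. ?hit i t) = real (card ((\<lambda>i. i + t) ` {i. i < K \<and> i + t \<in> ?P}))"
      by (simp add: sum.If_cases Int_def card_image)
    also have "card ((\<lambda>i. i + t) ` {i. i < K \<and> i + t \<in> ?P}) \<le> count_below ?P (K + T)"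
      unfolding count_below_def by (rule card_mono) (use \<open>t \<in> {..<T}\<close> in auto)
    finally show "(\<Sum>i<K. ?hit i t) \<le> real (count_below ?P (K + T))" by simp
  qed
  finally show ?thesis by simp
qed

lemma dfa_run_can_accept:
  assumes "is_dfa Q \<delta> qs F" and "sel_infinite (dfa_strategy \<delta> qs F) \<alpha>"
  shows "dfa_run \<delta> qs \<alpha> i \<in> {r \<in> Q. \<exists>u. foldl \<delta> r u \<in> F}"
proof -
  obtain j where "j \<in> sel_positions (dfa_strategy \<delta> qs F) \<alpha>" and "j \<ge> i"
    using assms(2) unfolding sel_infinite_def by (meson infinite_nat_iff_unbounded_le)
  then have "foldl \<delta> (dfa_run \<delta> qs \<alpha> i) (window \<alpha> i (j - i)) \<in> F"
    using dfa_run_add[of \<delta> qs \<alpha> i "j - i"] by (simp add: sel_positions_dfa_strategy)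
  moreover have "dfa_run \<delta> qs \<alpha> i \<in> Q"
    using assms(1) unfolding dfa_run_def is_dfa_def by (blast intro: foldl_in_closed)
  ultimately show ?thesis by blast
qed

text \<open>Pick for each state of \<open>R\<close> a word leading to acceptance; \<open>T\<close> exceeds all their lengths
  and \<open>c\<close> is the least of their probabilities.\<close>

lemma uniform_hitting_probability:
  fixes p :: "'a::countable \<Rightarrow> real" and \<delta> :: "'q \<Rightarrow> 'a \<Rightarrow> 'q"
  assumes bernoulli: "bernoulli_distr p" and pos: "\<And>a. p a > 0" and "finite R"
    and reach: "\<And>r. r \<in> R \<Longrightarrow> \<exists>u. foldl \<delta> r u \<in> F"
  obtains T c where "T \<ge> 1" and "c > 0"
    and "\<And>r. r \<in> R \<Longrightarrow> c \<le> expect (word_pmf p T) (hit_indicator \<delta> F T r)"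
proof -
  define u where "u r = (SOME u. foldl \<delta> r u \<in> F)" for r
  have u: "foldl \<delta> r (u r) \<in> F" if "r \<in> R" for r
    unfolding u_def using reach[OF that] by (rule someI_ex)
  define T where "T = Suc (Max (insert 0 ((\<lambda>r. length (u r)) ` R)))"
  have uT: "length (u r) < T" if "r \<in> R" for r
    unfolding T_def using that \<open>finite R\<close> by (simp add: le_imp_less_Suc)
  define c where "c = Min (insert 1 ((\<lambda>r. prod_list (map p (u r))) ` R))"
  have "c > 0" unfolding c_def using \<open>finite R\<close> prod_list_map_pos[OF pos] by auto
  moreover have "c \<le> expect (word_pmf p T) (hit_indicator \<delta> F T r)" if "r \<in> R" for r
  proof -
    have "c \<le> prod_list (map p (u r))" unfolding c_def using that \<open>finite R\<close> by auto
    also have "\<dots> = expect (word_pmf p T) (\<lambda>v. if take (length (u r)) v = u r then 1 else 0)"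
      using uT[OF that] by (intro prob_word_pmf_prefix[OF bernoulli, symmetric]) simp
    also have "\<dots> \<le> expect (word_pmf p T) (hit_indicator \<delta> F T r)"
      using u[OF that] uT[OF that] hit_indicator_range[of \<delta> F T]
      by (intro integral_mono integrable_measure_pmf_bounded[where B=1])
        (auto simp: hit_indicator_def abs_le_iff)
    finally show ?thesis .
  qed
  ultimately show ?thesis using that[of T c] unfolding T_def by auto
qed

lemma tendsto_ratio_of_lower_density:
  fixes A C :: "nat \<Rightarrow> real"
  assumes "(\<lambda>K. (A K - x * C K) / real K) \<longlonglongrightarrow> 0"
    and "c > 0" and "eventually (\<lambda>K. c * real K \<le> C K) sequentially"
  shows "(\<lambda>K. A K / C K) \<longlonglongrightarrow> x"
proof -
  have "(\<lambda>K. A K / C K - x) \<longlonglongrightarrow> 0"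
  proof (rule Lim_null_comparison)
    show "eventually (\<lambda>K. norm (A K / C K - x) \<le> \<bar>(A K - x * C K) / real K\<bar> / c) sequentially"
      using assms(3) eventually_gt_at_top[of 0]
    proof eventually_elim
      case (elim K)
      then have "real K > 0" and "c * real K > 0" using \<open>c > 0\<close> by auto
      then have "C K > 0" using elim(1) by linarith
      then have "norm (A K / C K - x) = \<bar>(A K - x * C K) / real K\<bar> * (real K / C K)"
        using \<open>real K > 0\<close> by (simp add: field_simps abs_divide abs_mult)
      also have "\<dots> \<le> \<bar>(A K - x * C K) / real K\<bar> * (1 / c)"
        using elim(1) \<open>C K > 0\<close> \<open>c > 0\<close> by (intro mult_left_mono) (simp_all add: field_simps)
      finally show ?case by simp
    qed
    show "(\<lambda>K. \<bar>(A K - x * C K) / real K\<bar> / c) \<longlonglongrightarrow> 0"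
      using tendsto_divide[OF tendsto_rabs[OF assms(1)] tendsto_const[of c]] \<open>c > 0\<close> by simp
  qed
  then show ?thesis by (simp add: LIM_zero_iff)
qed

context
  fixes p :: "'a::countable \<Rightarrow> real"
  assumes bernoulli: "bernoulli_distr p" and pos: "\<And>a. p a > 0"
begin

text \<open>The run only visits states from which acceptance is reachable, and from each of them
  acceptance happens within \<open>T\<close> steps with probability at least \<open>c\<close>.\<close>

lemma dfa_selection_positive_density:
  assumes normal: "bernoulli_normal p \<alpha>"
    and dfa: "is_dfa Q \<delta> qs F" and infinite: "sel_infinite (dfa_strategy \<delta> qs F) \<alpha>"
  obtains c where "c > 0"
    and "eventually (\<lambda>K. c * real K \<le> count_below (sel_positions (dfa_strategy \<delta> qs F) \<alpha>) K) sequentially"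
proof -
  let ?P = "sel_positions (dfa_strategy \<delta> qs F) \<alpha>"
  let ?s = "dfa_run \<delta> qs \<alpha>"
  have Q: "finite Q" "\<forall>q\<in>Q. \<forall>a. \<delta> q a \<in> Q" "qs \<in> Q" using dfa unfolding is_dfa_def by auto
  define R where "R = {r \<in> Q. \<exists>u. foldl \<delta> r u \<in> F}"
  have "?s i \<in> R" for i
    unfolding R_def by (rule dfa_run_can_accept[OF dfa infinite])
  moreover obtain T c where "T \<ge> 1" "c > 0"
    and c: "\<And>r. r \<in> R \<Longrightarrow> c \<le> expect (word_pmf p T) (hit_indicator \<delta> F T r)"
    by (rule uniform_hitting_probability[OF bernoulli pos, of R]) (auto simp: R_def Q(1))
  ultimately have expect_ge: "c * real K \<le> (\<Sum>i<K. expect (word_pmf p T) (hit_indicator \<delta> F T (?s i)))" for K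
    using sum_mono[of "{..<K}" "\<lambda>_. c"] by (simp add: mult.commute)
  have "(\<lambda>K. (\<Sum>i<K. hit_indicator \<delta> F T (?s i) (window \<alpha> i T)
      - expect (word_pmf p T) (hit_indicator \<delta> F T (?s i))) / real K) \<longlonglongrightarrow> 0"
    by (rule dfa_deviation_average_tendsto_0[OF bernoulli hit_indicator_range normal Q])
  then have "eventually (\<lambda>K. (\<Sum>i<K. hit_indicator \<delta> F T (?s i) (window \<alpha> i T)
      - expect (word_pmf p T) (hit_indicator \<delta> F T (?s i))) / real K > - (c / 2)) sequentially"
    using \<open>c > 0\<close> by (intro order_tendstoD) auto
  moreover have "eventually (\<lambda>K. real K \<ge> 4 * T * T / c) sequentially"
    using filterlim_real_sequentially unfolding filterlim_at_top by blast
  ultimately have "eventually (\<lambda>K. c / (4 * T) * real K \<le> count_below ?P K) sequentially"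
    using eventually_gt_at_top[of 0]
  proof eventually_elim
    case (elim K)
    have "c / 2 * real K < (\<Sum>i<K. hit_indicator \<delta> F T (?s i) (window \<alpha> i T))"
      using elim(1,3) expect_ge[of K] by (simp add: sum_subtractf field_simps)
    also have "\<dots> \<le> real T * count_below ?P (K + T)"
      by (rule sum_hit_indicator_le)
    also have "\<dots> \<le> real T * (count_below ?P K + T)"
      using count_below_add_le[of ?P K T] by (intro mult_left_mono) linarith+
    finally have "c / (2 * T) * real K - T < count_below ?P K"
      using \<open>T \<ge> 1\<close> by (simp add: field_simps)
    moreover have "c / (4 * T) * real K \<le> c / (2 * T) * real K - T"
      using elim(2) \<open>T \<ge> 1\<close> \<open>c > 0\<close> by (simp add: field_simps)
    ultimately show ?case by linarith
  qed
  moreover have "c / (4 * T) > 0" using \<open>c > 0\<close> \<open>T \<ge> 1\<close> by simp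
  ultimately show ?thesis using that by blast
qed

lemma dfa_selected_letter_freq:
  assumes normal: "bernoulli_normal p \<alpha>"
    and dfa: "is_dfa Q \<delta> qs F" and infinite: "sel_infinite (dfa_strategy \<delta> qs F) \<alpha>"
  shows "word_freq [a] (selected (dfa_strategy \<delta> qs F) \<alpha>) \<longlonglongrightarrow> p a"
proof -
  let ?P = "sel_positions (dfa_strategy \<delta> qs F) \<alpha>"
  let ?s = "dfa_run \<delta> qs \<alpha>"
  have Q: "finite Q" "\<forall>q\<in>Q. \<forall>a. \<delta> q a \<in> Q" "qs \<in> Q" using dfa unfolding is_dfa_def by auto
  define A where "A K = real (card {i. i \<in> ?P \<and> i < K \<and> \<alpha> i = a})" for K
  define C where "C K = real (count_below ?P K)" for K
  define H where "H q v = (if q \<in> F \<and> take 1 v = [a] then 1 else 0 :: real)" for q v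
  have H_range: "0 \<le> H q v \<and> H q v \<le> 1" for q v unfolding H_def by auto
  have "expect (word_pmf p 1) (H q) = (if q \<in> F then p a else 0)" for q
    using prob_word_pmf_prefix[OF bernoulli, of "[a]" 1] unfolding H_def by simp
  then have "(\<Sum>i<K. expect (word_pmf p 1) (H (?s i))) = p a * C K" for K
    unfolding C_def count_below_def
    by (simp add: sum_distrib_left[symmetric] sum.If_cases Int_def sel_positions_dfa_strategy conj_commute)
  moreover have "(\<Sum>i<K. H (?s i) (window \<alpha> i 1)) = A K" for K
    unfolding A_def H_def
    by (simp add: sum.If_cases Int_def window_def sel_positions_dfa_strategy)
      (rule arg_cong[where f = card], auto)
  moreover have "(\<lambda>K. (\<Sum>i<K. H (?s i) (window \<alpha> i 1) - expect (word_pmf p 1) (H (?s i))) / real K) \<longlonglongrightarrow> 0"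
    by (rule dfa_deviation_average_tendsto_0[OF bernoulli H_range normal Q])
  ultimately have "(\<lambda>K. (A K - p a * C K) / real K) \<longlonglongrightarrow> 0"
    by (simp add: sum_subtractf)
  moreover obtain c where "c > 0" "eventually (\<lambda>K. c * real K \<le> C K) sequentially"
    using dfa_selection_positive_density[OF normal dfa infinite] unfolding C_def by blast
  ultimately have "(\<lambda>K. A K / C K) \<longlonglongrightarrow> p a"
    by (rule tendsto_ratio_of_lower_density)
  then show ?thesis
    using letter_freq_enumerate_iff[of ?P \<alpha> a "p a"] infinite
    unfolding A_def C_def selected_def sel_infinite_def by simp
qed

text \<open>Agafonov's theorem, by induction on the word: the frequency of \<open>w a\<close> in the selected
  sequence is that of \<open>w\<close> times the frequency of \<open>a\<close> after occurrences of \<open>w\<close>, and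
  selecting after \<open>w\<close> from an automatic selection is again an automatic selection.\<close>

lemma bernoulli_normal_dfa_selected:
  assumes normal: "bernoulli_normal p \<alpha>"
    and dfa: "is_dfa Q \<delta> qs F" and infinite: "sel_infinite (dfa_strategy \<delta> qs F) \<alpha>"
  shows "bernoulli_normal p (selected (dfa_strategy \<delta> qs F) \<alpha>)"
proof -
  let ?S = "dfa_strategy \<delta> qs F"
  let ?\<beta> = "selected ?S \<alpha>"
  have "infinite (sel_positions ?S \<alpha>)" using infinite unfolding sel_infinite_def .
  have "word_freq w ?\<beta> \<longlonglongrightarrow> prod_list (map p w)" for w
  proof (induction w rule: rev_induct)
    case Nil
    have "(\<lambda>K. 1 + 1 / real K) \<longlonglongrightarrow> 1 + 0"
      by (intro tendsto_add tendsto_const lim_const_over_n)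
    moreover have "eventually (\<lambda>K. 1 + 1 / real K = word_freq [] ?\<beta> K) sequentially"
      using eventually_gt_at_top[of 0] by eventually_elim (simp add: occ_Nil_pref field_simps)
    ultimately show ?case using Lim_transform_eventually by fastforce
  next
    case (snoc a w)
    have "sel_infinite (postnikova w) ?\<beta>"
      by (rule sel_infinite_postnikova[OF snoc prod_list_map_pos[OF pos]])
    moreover obtain Q' \<delta>' qs' F' where "is_dfa Q' \<delta>' qs' F'"
      and "dfa_strategy \<delta>' qs' F' = strategy_comp ?S (postnikova w)"
      using postnikova_eq_dfa_strategy[of w] dfa_strategy_comp[OF dfa] by metis
    ultimately have "word_freq [a] (selected (postnikova w) ?\<beta>) \<longlonglongrightarrow> p a"
      using dfa_selected_letter_freq[OF normal, of Q' \<delta>' qs' F' a]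
        sel_infinite_strategy_comp_iff[OF \<open>infinite (sel_positions ?S \<alpha>)\<close>]
        selected_strategy_comp[OF \<open>infinite (sel_positions ?S \<alpha>)\<close>]
      by simp
    from word_freq_snoc_tendsto[OF snoc \<open>sel_infinite (postnikova w) ?\<beta>\<close> this]
    show ?case by simp
  qed
  then show ?thesis unfolding bernoulli_normal_def by blast
qed

end

section \<open>The Postnikova property forces a positive Bernoulli measure\<close>

definition postnikova_property :: "('a list \<Rightarrow> real) \<Rightarrow> bool" where
  "postnikova_property \<mu> \<longleftrightarrow> (\<forall>w \<alpha>. mu_distributed \<mu> \<alpha> \<and> sel_infinite (postnikova w) \<alpha>
     \<longrightarrow> mu_distributed \<mu> (selected (postnikova w) \<alpha>))"

lemma occ_pref_le_occ_pref_add_changes: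
  "real (occ w (pref \<alpha> N))
    \<le> real (occ w (pref \<alpha>' N)) + real (length w) * real (card {i. i < N \<and> \<alpha>' i \<noteq> \<alpha> i})"
proof -
  let ?L = "length w"
  define D where "D = {i. i < N \<and> \<alpha>' i \<noteq> \<alpha> i}"
  have "{j. j + ?L \<le> N \<and> window \<alpha> j ?L = w}
      \<subseteq> {j. j + ?L \<le> N \<and> window \<alpha>' j ?L = w} \<union> (\<Union>t<?L. {j. j + t \<in> D})"
  proof
    fix j assume j: "j \<in> {j. j + ?L \<le> N \<and> window \<alpha> j ?L = w}"
    show "j \<in> {j. j + ?L \<le> N \<and> window \<alpha>' j ?L = w} \<union> (\<Union>t<?L. {j. j + t \<in> D})"
    proof (cases "window \<alpha>' j ?L = window \<alpha> j ?L")
      case False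
      then obtain i where "i \<in> {j..<j + ?L}" and "\<alpha>' i \<noteq> \<alpha> i"
        unfolding window_def map_eq_conv by auto
      then show ?thesis
        using j by (auto simp: D_def intro!: bexI[of _ "i - j"])
    qed (use j in auto)
  qed
  moreover have card_shift: "card {j. j + t \<in> D} \<le> card D" for t
  proof -
    have "card {j. j + t \<in> D} = card ((\<lambda>j. j + t) ` {j. j + t \<in> D})" by (simp add: card_image)
    also have "\<dots> \<le> card D" by (rule card_mono) (auto simp: D_def)
    finally show ?thesis .
  qed
  moreover have "finite {j. j + t \<in> D}" for t
    by (rule finite_subset[of _ "{..<N}"]) (auto simp: D_def)
  moreover have "finite {j. j + ?L \<le> N \<and> window \<alpha>' j ?L = w}"
    by (rule finite_subset[of _ "{..N}"]) auto
  ultimately have "card {j. j + ?L \<le> N \<and> window \<alpha> j ?L = w}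
      \<le> card ({j. j + ?L \<le> N \<and> window \<alpha>' j ?L = w} \<union> (\<Union>t<?L. {j. j + t \<in> D}))"
    by (intro card_mono) auto
  also have "\<dots> \<le> card {j. j + ?L \<le> N \<and> window \<alpha>' j ?L = w} + card (\<Union>t<?L. {j. j + t \<in> D})"
    by (rule card_Un_le)
  also have "card (\<Union>t<?L. {j. j + t \<in> D}) \<le> (\<Sum>t<?L. card {j. j + t \<in> D})"
    by (rule card_UN_le) simp
  also have "\<dots> \<le> (\<Sum>t<?L. card D)"
    by (rule sum_mono) (rule card_shift)
  finally have "card {j. j + ?L \<le> N \<and> window \<alpha> j ?L = w}
      \<le> card {j. j + ?L \<le> N \<and> window \<alpha>' j ?L = w} + ?L * card D"
    by simp
  then have "real (card {j. j + ?L \<le> N \<and> window \<alpha> j ?L = w})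
      \<le> real (card {j. j + ?L \<le> N \<and> window \<alpha>' j ?L = w} + ?L * card D)"
    by (rule of_nat_mono)
  then show ?thesis unfolding occ_pref_eq_card_windows D_def by simp
qed

lemma word_freq_tendsto_of_sparse_changes:
  assumes "word_freq w \<alpha> \<longlonglongrightarrow> m"
    and changes: "(\<lambda>N. real (card {i. i < N \<and> \<alpha>' i \<noteq> \<alpha> i}) / real N) \<longlonglongrightarrow> 0"
  shows "word_freq w \<alpha>' \<longlonglongrightarrow> m"
proof (rule Lim_transform[OF assms(1)])
  define d where "d N = real (card {i. i < N \<and> \<alpha>' i \<noteq> \<alpha> i})" for N
  have "{i. i < N \<and> \<alpha> i \<noteq> \<alpha>' i} = {i. i < N \<and> \<alpha>' i \<noteq> \<alpha> i}" for N
    by auto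
  then have "\<bar>real (occ w (pref \<alpha>' N)) - real (occ w (pref \<alpha> N))\<bar> \<le> real (length w) * d N" for N
    using occ_pref_le_occ_pref_add_changes[of w \<alpha> N \<alpha>'] occ_pref_le_occ_pref_add_changes[of w \<alpha>' N \<alpha>]
    unfolding d_def abs_le_iff by auto
  then have norm_le: "norm (word_freq w \<alpha>' N - word_freq w \<alpha> N) \<le> real (length w) * (d N / real N)" for N
    unfolding diff_divide_distrib[symmetric] real_norm_def abs_divide abs_of_nat times_divide_eq_right
    by (rule divide_right_mono) simp
  have "(\<lambda>N. real (length w) * (d N / real N)) \<longlonglongrightarrow> 0"
    using tendsto_mult_right_zero[OF changes] unfolding d_def by simp
  then show "(\<lambda>N. word_freq w \<alpha>' N - word_freq w \<alpha> N) \<longlonglongrightarrow> 0"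
    by (rule Lim_null_comparison[OF always_eventually[OF allI[OF norm_le]]])
qed

definition squares :: "nat set" where
  "squares = {k * k | k. k \<ge> 2}"

definition squares_and_successors :: "nat set" where
  "squares_and_successors = squares \<union> Suc ` squares"

lemma infinite_squares: "infinite squares"
proof -
  have "squares = (\<lambda>k. k * k) ` {2..}" unfolding squares_def by auto
  moreover have "strict_mono (\<lambda>k::nat. k * k)"
    by (rule strict_monoI) (simp add: mult_strict_mono)
  then have "inj_on (\<lambda>k::nat. k * k) {2..}"
    using strict_mono_imp_inj_on inj_on_subset by blast
  ultimately show ?thesis using finite_image_iff infinite_Ici by metis
qed

lemma card_squares_below_le: "real (card {i. i < N \<and> i \<in> squares}) \<le> sqrt N + 1"
proof -
  define s where "s = nat \<lceil>sqrt N\<rceil>"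
  have "{i. i < N \<and> i \<in> squares} \<subseteq> (\<lambda>k. k * k) ` {..<s}"
  proof
    fix i assume "i \<in> {i. i < N \<and> i \<in> squares}"
    then obtain k where k: "i = k * k" "k * k < N" unfolding squares_def by auto
    then have "real k ^ 2 < real N" by (simp add: power2_eq_square flip: of_nat_mult)
    then have "real k < sqrt N" by (rule real_less_rsqrt)
    then have "k < s" unfolding s_def by linarith
    then show "i \<in> (\<lambda>k. k * k) ` {..<s}" using k(1) by auto
  qed
  then have "card {i. i < N \<and> i \<in> squares} \<le> card ((\<lambda>k. k * k) ` {..<s})"
    by (intro card_mono) auto
  then have "card {i. i < N \<and> i \<in> squares} \<le> s"
    using card_image_le[of "{..<s}" "\<lambda>k. k * k"] by simp
  moreover have "real s = of_int \<lceil>sqrt N\<rceil>"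
    unfolding s_def by simp
  then have "real s \<le> sqrt N + 1"
    using of_int_ceiling_le_add_one[of "sqrt N"] by linarith
  ultimately show ?thesis by linarith
qed

lemma card_squares_and_successors_below_le:
  "card {i. i < N \<and> i \<in> squares_and_successors} \<le> 2 * card {i. i < N \<and> i \<in> squares}"
proof -
  have "{i. i < N \<and> i \<in> squares_and_successors}
      \<subseteq> {i. i < N \<and> i \<in> squares} \<union> Suc ` {i. i < N \<and> i \<in> squares}"
    unfolding squares_and_successors_def by auto
  then have "card {i. i < N \<and> i \<in> squares_and_successors}
      \<le> card ({i. i < N \<and> i \<in> squares} \<union> Suc ` {i. i < N \<and> i \<in> squares})"
    by (intro card_mono) auto
  also have "\<dots> \<le> card {i. i < N \<and> i \<in> squares} + card (Suc ` {i. i < N \<and> i \<in> squares})"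
    by (rule card_Un_le)
  finally show ?thesis using card_image_le[of "{i. i < N \<and> i \<in> squares}" Suc] by simp
qed

lemma squares_and_successors_density_tendsto_0:
  "(\<lambda>N. real (card {i. i < N \<and> i \<in> squares_and_successors}) / real N) \<longlonglongrightarrow> 0"
proof (rule Lim_null_comparison)
  show "eventually (\<lambda>N. norm (real (card {i. i < N \<and> i \<in> squares_and_successors}) / real N)
      \<le> 2 / sqrt N + 2 / real N) sequentially"
    using eventually_gt_at_top[of 0]
  proof eventually_elim
    case (elim N)
    have "real (card {i. i < N \<and> i \<in> squares_and_successors}) \<le> real (2 * card {i. i < N \<and> i \<in> squares})"
      by (rule of_nat_mono) (rule card_squares_and_successors_below_le)
    then have "real (card {i. i < N \<and> i \<in> squares_and_successors}) \<le> 2 * (sqrt N + 1)"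
      using card_squares_below_le[of N] by simp
    then have "norm (real (card {i. i < N \<and> i \<in> squares_and_successors}) / real N)
        \<le> 2 * (sqrt N + 1) / real N"
      by (simp add: divide_right_mono)
    also have "\<dots> = 2 / sqrt N + 2 / real N"
      using elim real_sqrt_mult_self[of N] by (simp add: field_simps)
    finally show ?case .
  qed
  have "filterlim (\<lambda>N. sqrt (real N)) at_top sequentially"
    by (rule filterlim_compose[OF sqrt_at_top filterlim_real_sequentially])
  then have "(\<lambda>N. 2 / sqrt N) \<longlonglongrightarrow> 0"
    by (intro tendsto_divide_0[OF tendsto_const] filterlim_at_top_imp_at_infinity)
  then show "(\<lambda>N. 2 / sqrt N + 2 / real N) \<longlonglongrightarrow> 0"
    using tendsto_add[OF _ lim_const_over_n[of 2]] by fastforce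
qed

text \<open>If \<open>b\<close> occurs exactly at the squares and their successors, selecting after each \<open>b\<close>
  picks every successor of a square, which is again \<open>b\<close>, and few other positions.\<close>

lemma postnikova_squares_letter_freq_ge:
  assumes b: "\<And>i. \<alpha> i = b \<longleftrightarrow> i \<in> squares_and_successors"
  defines "P \<equiv> sel_positions (postnikova [b]) \<alpha>"
  shows "eventually (\<lambda>K. 1 / 4 \<le> real (card {i. i \<in> P \<and> i < K \<and> \<alpha> i = b}) / real (count_below P K))
    sequentially"
  using eventually_ge_at_top[of 6]
proof eventually_elim
  case (elim K)
  have P: "i \<in> P \<longleftrightarrow> 1 \<le> i \<and> i - 1 \<in> squares_and_successors" for i
    unfolding P_def sel_positions_postnikova by (auto simp: window_def b[symmetric])
  define E where "E = {e. e \<in> squares \<and> e + 1 < K}"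
  have "finite E" unfolding E_def by (rule finite_subset[of _ "{..<K}"]) auto
  have "card E = card (Suc ` E)" by (simp add: card_image)
  also have "\<dots> \<le> card {i. i \<in> P \<and> i < K \<and> \<alpha> i = b}"
    unfolding E_def by (rule card_mono) (auto simp: P b squares_and_successors_def)
  finally have selected_b: "card E \<le> card {i. i \<in> P \<and> i < K \<and> \<alpha> i = b}" .
  have "4 \<in> E" using elim unfolding E_def squares_def by (auto intro: exI[of _ 2])
  then have "card E \<ge> 1" using \<open>finite E\<close> by (auto simp: Suc_le_eq card_gt_0_iff)
  have "{e. e < K \<and> e \<in> squares} \<subseteq> insert (K - 1) E" unfolding E_def by auto
  then have "card {e. e < K \<and> e \<in> squares} \<le> card (insert (K - 1) E)"
    using \<open>finite E\<close> by (intro card_mono) auto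
  then have squares_below: "card {e. e < K \<and> e \<in> squares} \<le> card E + 1"
    using \<open>finite E\<close> by (simp add: card_insert_if split: if_splits)
  have "{i. i \<in> P \<and> i < K} \<subseteq> Suc ` {j. j < K \<and> j \<in> squares_and_successors}"
  proof
    fix i assume "i \<in> {i. i \<in> P \<and> i < K}"
    then have "1 \<le> i" "i - 1 \<in> squares_and_successors" "i < K" using P by auto
    then show "i \<in> Suc ` {j. j < K \<and> j \<in> squares_and_successors}"
      by (intro image_eqI[of _ _ "i - 1"]) auto
  qed
  then have "count_below P K \<le> card (Suc ` {j. j < K \<and> j \<in> squares_and_successors})"
    unfolding count_below_def by (intro card_mono) auto
  then have "count_below P K \<le> card {j. j < K \<and> j \<in> squares_and_successors}"
    using card_image_le[of "{j. j < K \<and> j \<in> squares_and_successors}" Suc] by simp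
  then have "count_below P K \<le> 4 * card {i. i \<in> P \<and> i < K \<and> \<alpha> i = b}"
    using card_squares_and_successors_below_le[of K] squares_below selected_b \<open>card E \<ge> 1\<close>
    by linarith
  moreover have "card {i. i \<in> P \<and> i < K \<and> \<alpha> i = b} \<le> count_below P K"
    unfolding count_below_def by (rule card_mono) auto
  ultimately show ?case using selected_b \<open>card E \<ge> 1\<close> by (simp add: field_simps)
qed

lemma bernoulli_distr_letter_mu:
  fixes \<mu> :: "'a list \<Rightarrow> real"
  assumes prob: "prob_map \<mu>"
  shows "bernoulli_distr (\<lambda>a. \<mu> [a])"
proof -
  have "{w. length w = 1} = (\<lambda>a. [a]) ` UNIV" by (auto simp: length_Suc_conv)
  then have "(\<mu> has_sum 1) ((\<lambda>a. [a]) ` UNIV)"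
    using prob unfolding prob_map_def by (metis order_refl)
  then have "((\<lambda>a. \<mu> [a]) has_sum 1) UNIV"
    by (subst (asm) has_sum_reindex) (auto simp: inj_on_def o_def)
  then show ?thesis using prob unfolding bernoulli_distr_def prob_map_def by auto
qed

context
  fixes \<mu> :: "'a::countable list \<Rightarrow> real" and \<alpha>0 :: "nat \<Rightarrow> 'a"
  assumes prob: "prob_map \<mu>" and distributed: "mu_distributed \<mu> \<alpha>0"
    and postnikova: "postnikova_property \<mu>"
begin

lemma word_freq_tendsto_mu: "w \<noteq> [] \<Longrightarrow> word_freq w \<alpha>0 \<longlonglongrightarrow> \<mu> w"
  using distributed unfolding mu_distributed_def by blast

lemma mu_snoc: "w \<noteq> [] \<Longrightarrow> \<mu> (w @ [a]) = \<mu> w * \<mu> [a]"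
proof (cases "\<mu> w = 0")
  case True
  assume "w \<noteq> []"
  have "word_freq (w @ [a]) \<alpha>0 K \<le> word_freq w \<alpha>0 K" for K
    by (simp add: occ_append_le divide_right_mono)
  then have "\<mu> (w @ [a]) \<le> \<mu> w"
    by (intro tendsto_le[OF _ word_freq_tendsto_mu word_freq_tendsto_mu]) (auto simp: \<open>w \<noteq> []\<close>)
  moreover have "0 \<le> \<mu> (w @ [a])" using prob unfolding prob_map_def by simp
  ultimately show ?thesis using True by simp
next
  case False
  assume "w \<noteq> []"
  then have "\<mu> w > 0" using prob False unfolding prob_map_def by (simp add: order_le_neq_trans)
  then have infinite: "sel_infinite (postnikova w) \<alpha>0"
    by (rule sel_infinite_postnikova[OF word_freq_tendsto_mu[OF \<open>w \<noteq> []\<close>]])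
  then have "word_freq [a] (selected (postnikova w) \<alpha>0) \<longlonglongrightarrow> \<mu> [a]"
    using postnikova distributed unfolding postnikova_property_def mu_distributed_def by blast
  from word_freq_snoc_tendsto[OF word_freq_tendsto_mu[OF \<open>w \<noteq> []\<close>] infinite this]
  show ?thesis using LIMSEQ_unique word_freq_tendsto_mu by blast
qed

lemma induced_by_letter_mu: "induced_by \<mu> (\<lambda>a. \<mu> [a])"
  unfolding induced_by_def
proof (intro allI impI)
  fix w :: "'a list"
  show "w \<noteq> [] \<Longrightarrow> \<mu> w = prod_list (map (\<lambda>a. \<mu> [a]) w)"
  proof (induction w rule: rev_induct)
    case (snoc a w)
    then show ?case by (cases "w = []") (simp_all add: mu_snoc)
  qed simp
qed

lemma exists_other_letter:
  assumes "\<mu> [b] = 0"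
  shows "\<exists>c. c \<noteq> b"
proof (rule ccontr)
  assume "\<nexists>c. c \<noteq> b"
  then have "UNIV = {b}" by auto
  then have "((\<lambda>a. \<mu> [a]) has_sum 1) {b}"
    using bernoulli_distr_letter_mu[OF prob] unfolding bernoulli_distr_def by simp
  then show False using assms has_sum_finite[of "{b}" "\<lambda>a. \<mu> [a]"] has_sum_unique by force
qed

text \<open>The changed positions have density \<open>0\<close>.\<close>

lemma mu_distributed_letter_at_squares:
  assumes "\<mu> [b] = 0"
  obtains \<alpha> where "mu_distributed \<mu> \<alpha>" and "\<And>i. \<alpha> i = b \<longleftrightarrow> i \<in> squares_and_successors"
proof -
  obtain c where "c \<noteq> b" using exists_other_letter[OF assms] by blast
  define \<alpha> where "\<alpha> i = (if i \<in> squares_and_successors then b else if \<alpha>0 i = b then c else \<alpha>0 i)" for i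
  have b: "\<alpha> i = b \<longleftrightarrow> i \<in> squares_and_successors" for i unfolding \<alpha>_def using \<open>c \<noteq> b\<close> by auto
  have changes_le: "real (card {i. i < N \<and> \<alpha> i \<noteq> \<alpha>0 i}) / real N
      \<le> real (card {i. i < N \<and> i \<in> squares_and_successors}) / real N + word_freq [b] \<alpha>0 N" for N
  proof -
    have "card {i. i < N \<and> \<alpha> i \<noteq> \<alpha>0 i}
        \<le> card ({i. i < N \<and> i \<in> squares_and_successors} \<union> {i. i < N \<and> \<alpha>0 i = b})"
      unfolding \<alpha>_def by (intro card_mono) auto
    also have "\<dots> \<le> card {i. i < N \<and> i \<in> squares_and_successors} + card {i. i < N \<and> \<alpha>0 i = b}"
      by (rule card_Un_le)
    finally have "real (card {i. i < N \<and> \<alpha> i \<noteq> \<alpha>0 i})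
        \<le> real (card {i. i < N \<and> i \<in> squares_and_successors}) + real (occ [b] (pref \<alpha>0 N))"
      unfolding occ_singleton_pref by linarith
    then show ?thesis by (simp add: divide_right_mono flip: add_divide_distrib)
  qed
  have "word_freq [b] \<alpha>0 \<longlonglongrightarrow> 0" using word_freq_tendsto_mu[of "[b]"] \<open>\<mu> [b] = 0\<close> by simp
  then have bound_lim: "(\<lambda>N. real (card {i. i < N \<and> i \<in> squares_and_successors}) / real N
      + word_freq [b] \<alpha>0 N) \<longlonglongrightarrow> 0"
    using tendsto_add[OF squares_and_successors_density_tendsto_0] by fastforce
  have "(\<lambda>N. real (card {i. i < N \<and> \<alpha> i \<noteq> \<alpha>0 i}) / real N) \<longlonglongrightarrow> 0"
  proof (rule tendsto_sandwich[where f="\<lambda>_. 0"])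
    show "eventually (\<lambda>N. real (card {i. i < N \<and> \<alpha> i \<noteq> \<alpha>0 i}) / real N
        \<le> real (card {i. i < N \<and> i \<in> squares_and_successors}) / real N + word_freq [b] \<alpha>0 N) sequentially"
      using changes_le by simp
  qed (simp_all add: bound_lim)
  then have "mu_distributed \<mu> \<alpha>"
    unfolding mu_distributed_def
    using word_freq_tendsto_of_sparse_changes[OF word_freq_tendsto_mu] by simp
  then show ?thesis using b by (rule that)
qed

lemma letter_mu_pos: "\<mu> [b] > 0"
proof (rule ccontr)
  assume "\<not> \<mu> [b] > 0"
  then have "\<mu> [b] = 0"
    using bernoulli_distr_letter_mu[OF prob] unfolding bernoulli_distr_def by (meson not_le order_antisym)
  then obtain \<alpha> where "mu_distributed \<mu> \<alpha>" and b: "\<And>i. \<alpha> i = b \<longleftrightarrow> i \<in> squares_and_successors"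
    using mu_distributed_letter_at_squares by blast
  let ?P = "sel_positions (postnikova [b]) \<alpha>"
  have "Suc ` squares \<subseteq> ?P"
    by (auto simp: sel_positions_postnikova window_def b squares_and_successors_def)
  moreover have "infinite (Suc ` squares)"
    using infinite_squares by (simp add: finite_image_iff)
  ultimately have "infinite ?P" using finite_subset by blast
  then have "mu_distributed \<mu> (selected (postnikova [b]) \<alpha>)"
    using postnikova \<open>mu_distributed \<mu> \<alpha>\<close> unfolding postnikova_property_def sel_infinite_def by blast
  then have "word_freq [b] (selected (postnikova [b]) \<alpha>) \<longlonglongrightarrow> 0"
    using \<open>\<mu> [b] = 0\<close> unfolding mu_distributed_def by (metis list.distinct(1))
  then have "(\<lambda>K. real (card {i. i \<in> ?P \<and> i < K \<and> \<alpha> i = b}) / real (count_below ?P K)) \<longlonglongrightarrow> 0"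
    using letter_freq_enumerate_iff[OF \<open>infinite ?P\<close>, of \<alpha> b 0] unfolding selected_def by simp
  then have "eventually (\<lambda>K. real (card {i. i \<in> ?P \<and> i < K \<and> \<alpha> i = b}) / real (count_below ?P K) < 1 / 4)
      sequentially"
    by (rule order_tendstoD) simp
  with postnikova_squares_letter_freq_ge[OF b] have "eventually (\<lambda>K. False) sequentially"
    by eventually_elim simp
  then show False by simp
qed

end

definition agafonov_property :: "('a list \<Rightarrow> real) \<Rightarrow> bool" where
  "agafonov_property \<mu> \<longleftrightarrow> (\<forall>Q \<delta> qs F \<alpha>. is_dfa Q \<delta> qs F \<and> mu_distributed \<mu> \<alpha>
     \<and> sel_infinite (dfa_strategy \<delta> qs F) \<alpha> \<longrightarrow> mu_distributed \<mu> (selected (dfa_strategy \<delta> qs F) \<alpha>))"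

lemma bernoulli_imp_agafonov_property:
  fixes \<mu> :: "'a::countable list \<Rightarrow> real"
  assumes "bernoulli_distr p" and "\<forall>a. p a > 0" and "induced_by \<mu> p"
  shows "agafonov_property \<mu>"
  using bernoulli_normal_dfa_selected[OF assms(1)] assms(2)
  unfolding agafonov_property_def mu_distributed_iff_bernoulli_normal[OF assms(3)] by blast

lemma agafonov_imp_postnikova_property:
  fixes \<mu> :: "'a::countable list \<Rightarrow> real"
  shows "agafonov_property \<mu> \<Longrightarrow> postnikova_property \<mu>"
  unfolding agafonov_property_def postnikova_property_def
  by (metis postnikova_eq_dfa_strategy)

theorem theorem3p1:
  fixes \<mu> :: "'a::countable list \<Rightarrow> real"
  assumes "prob_map \<mu>"
    and "\<exists>\<alpha>. mu_distributed \<mu> \<alpha>"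
  shows "((\<exists>p. bernoulli_distr p \<and> (\<forall>a. p a > 0) \<and> induced_by \<mu> p)
          \<longleftrightarrow> (\<forall>w \<alpha>. mu_distributed \<mu> \<alpha> \<and> sel_infinite (postnikova w) \<alpha>
                   \<longrightarrow> mu_distributed \<mu> (selected (postnikova w) \<alpha>)))
       \<and> ((\<forall>w \<alpha>. mu_distributed \<mu> \<alpha> \<and> sel_infinite (postnikova w) \<alpha>
                   \<longrightarrow> mu_distributed \<mu> (selected (postnikova w) \<alpha>))
          \<longleftrightarrow> (\<forall>Q \<delta> qs F \<alpha>. is_dfa Q \<delta> qs F \<and> mu_distributed \<mu> \<alpha>
                   \<and> sel_infinite (dfa_strategy \<delta> qs F) \<alpha>
                   \<longrightarrow> mu_distributed \<mu> (selected (dfa_strategy \<delta> qs F) \<alpha>)))"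
proof -
  obtain \<alpha>0 where \<alpha>0: "mu_distributed \<mu> \<alpha>0" using assms(2) by blast
  have "postnikova_property \<mu> \<Longrightarrow> \<exists>p. bernoulli_distr p \<and> (\<forall>a. p a > 0) \<and> induced_by \<mu> p"
    using bernoulli_distr_letter_mu[OF assms(1)] letter_mu_pos[OF assms(1) \<alpha>0]
      induced_by_letter_mu[OF assms(1) \<alpha>0] by blast
  then show ?thesis
    using bernoulli_imp_agafonov_property agafonov_imp_postnikova_property
    unfolding agafonov_property_def postnikova_property_def by blast
qed

end
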